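(* From a name of a meromorphic function $f$ and a name of a closed set $C\subseteq\mathrm{dom}(f)$, one can uniformly compute a name of the closed set $f[C]$.
   Context: Computability is in the sense of Type-Two Effectivity. $\hat{\mathbb{C}}=\mathbb{C}\cup\{\infty\}$, and $D_r(z)$ is the open disk of radius $r$ centered at $z$. The basic open sets are the open rectangles whose vertices have rational coordinates, together with the sets $\hat{\mathbb{C}}\setminus\overline{D_r(0)}$ with $r$ rational. Names: - A name of a point $z\in\hat{\mathbb{C}}$ is a list of all basic open sets containing $z$. - A name of a closed set $C\subseteq\hat{\mathbb{C}}$ is a list of all basic open sets meeting $C$. - A name of a partial function $f:\subseteq\hat{\mathbb{C}}\to\hat{\mathbb{C}}$ is an oracle $X\subseteq\mathbb{N}$ together with a code of an oracle Turing machine with one-way output tape. With oracle $X$, this machine converts every name of every $z\in\mathrm{dom}(f)$ into a name of $f(z)$. - "Uniformly computable" means a single Turing machine, given names of the data, writes a name of the output. A meromorphic function is one meromorphic on an open subset of $\hat{\mathbb{C}}$, with values in $\hat{\mathbb{C}}$. *)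

theory Defs
  imports "HOL-Analysis.Analysis" "HOL-Library.Nat_Bijection"
begin

text \<open>Programs of a Turing-complete model of oracle computation (mu-recursive
functions with an oracle-call primitive).\<close>

datatype rf = Zer | Suc_rf | Proj nat | Comp rf "rf list" | Prim rf rf | Mu rf | Orc

definition arg0 :: "nat list \<Rightarrow> nat" where
  "arg0 xs = (case xs of [] \<Rightarrow> 0 | x # _ \<Rightarrow> x)"

inductive eval :: "(nat \<Rightarrow> nat) \<Rightarrow> rf \<Rightarrow> nat list \<Rightarrow> nat \<Rightarrow> bool"
  for g :: "nat \<Rightarrow> nat" where
  ev_zer: "eval g Zer xs 0"
| ev_suc: "eval g Suc_rf xs (Suc (arg0 xs))"
| ev_proj: "i < length xs \<Longrightarrow> eval g (Proj i) xs (xs ! i)"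
| ev_orc: "eval g Orc xs (g (arg0 xs))"
| ev_comp: "list_all2 (\<lambda>h y. eval g h xs y) hs ys \<Longrightarrow> eval g f ys y \<Longrightarrow> eval g (Comp f hs) xs y"
| ev_prim0: "eval g f xs y \<Longrightarrow> eval g (Prim f h) (0 # xs) y"
| ev_primS: "eval g (Prim f h) (n # xs) r \<Longrightarrow> eval g h (r # n # xs) y \<Longrightarrow>
             eval g (Prim f h) (Suc n # xs) y"
| ev_mu: "eval g f (n # xs) 0 \<Longrightarrow> (\<forall>m<n. \<exists>y. eval g f (m # xs) (Suc y)) \<Longrightarrow>
          eval g (Mu f) xs n"

fun rf_enc :: "rf \<Rightarrow> nat" where
  "rf_enc Zer = prod_encode (0, 0)"
| "rf_enc Suc_rf = prod_encode (1, 0)"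
| "rf_enc (Proj i) = prod_encode (2, i)"
| "rf_enc (Comp f hs) = prod_encode (3, prod_encode (rf_enc f, list_encode (map rf_enc hs)))"
| "rf_enc (Prim f h) = prod_encode (4, prod_encode (rf_enc f, rf_enc h))"
| "rf_enc (Mu f) = prod_encode (5, rf_enc f)"
| "rf_enc Orc = prod_encode (6, 0)"

definition join :: "(nat \<Rightarrow> nat) \<Rightarrow> (nat \<Rightarrow> nat) \<Rightarrow> nat \<Rightarrow> nat" where
  "join a b k = (if even k then a (k div 2) else b (k div 2))"

definition chi :: "nat set \<Rightarrow> nat \<Rightarrow> nat" where
  "chi X k = (if k \<in> X then 1 else 0)"

definition computes :: "rf \<Rightarrow> (nat \<Rightarrow> nat) \<Rightarrow> (nat \<Rightarrow> nat) \<Rightarrow> bool" where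
  "computes p g r \<longleftrightarrow> (\<forall>n. eval g p [n] (r n))"

section \<open>The Riemann sphere, complex option (None = infinity)\<close>

definition cs_open :: "complex option set \<Rightarrow> bool" where
  "cs_open A \<longleftrightarrow> open {z. Some z \<in> A} \<and>
     (None \<in> A \<longrightarrow> (\<exists>R. \<forall>z. R < norm z \<longrightarrow> Some z \<in> A))"

definition cs_closed :: "complex option set \<Rightarrow> bool" where
  "cs_closed C \<longleftrightarrow> cs_open (- C)"

text \<open>Inverse charts: around a finite point the identity, around infinity w |-> 1/w.\<close>
definition ichart :: "complex option \<Rightarrow> complex \<Rightarrow> complex option" where
  "ichart a w = (case a of Some _ \<Rightarrow> Some w | None \<Rightarrow> (if w = 0 then None else Some (1 / w)))"

definition ctr :: "complex option \<Rightarrow> complex" where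
  "ctr a = (case a of Some c \<Rightarrow> c | None \<Rightarrow> 0)"

text \<open>Coordinate of a value v in the chart centered at b.\<close>
definition vcoord :: "complex option \<Rightarrow> complex option \<Rightarrow> complex" where
  "vcoord b v = (case b of
      Some _ \<Rightarrow> (case v of Some x \<Rightarrow> x | None \<Rightarrow> 0)
    | None \<Rightarrow> (case v of Some x \<Rightarrow> 1 / x | None \<Rightarrow> 0))"

definition vok :: "complex option \<Rightarrow> complex option \<Rightarrow> bool" where
  "vok b v = (case b of Some _ \<Rightarrow> v \<noteq> None | None \<Rightarrow> v \<noteq> Some 0)"

text \<open>f is meromorphic on the open set U of the sphere: a holomorphic map
U -> sphere (holomorphic in local charts), not identically infinity on any
nonempty open subset of U.\<close>
definition meromorphic_sphere :: "complex option set \<Rightarrow> (complex option \<Rightarrow> complex option) \<Rightarrow> bool" where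
  "meromorphic_sphere U f \<longleftrightarrow> cs_open U \<and>
     (\<forall>a\<in>U. \<exists>r>0. (\<forall>w\<in>ball (ctr a) r. ichart a w \<in> U \<and> vok (f a) (f (ichart a w))) \<and>
                  (\<lambda>w. vcoord (f a) (f (ichart a w))) holomorphic_on ball (ctr a) r) \<and>
     (\<forall>W. cs_open W \<and> W \<noteq> {} \<and> W \<subseteq> U \<longrightarrow> (\<exists>z\<in>W. f z \<noteq> None))"

definition rat_dec :: "nat \<Rightarrow> rat" where
  "rat_dec n = (case prod_decode n of (p, q) \<Rightarrow> Fract (int_decode p) (int_decode q))"

definition rect :: "rat \<Rightarrow> rat \<Rightarrow> rat \<Rightarrow> rat \<Rightarrow> complex option set" where
  "rect a b c d = {Some z | z. of_rat a < Re z \<and> Re z < of_rat b \<and> of_rat c < Im z \<and> Im z < of_rat d}"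

definition ext_disk :: "rat \<Rightarrow> complex option set" where
  "ext_disk r = {None} \<union> {Some z | z. of_rat r < norm z}"

text \<open>Every natural number denotes a basic open set; every basic open set is denoted.\<close>
definition bset :: "nat \<Rightarrow> complex option set" where
  "bset m = (case prod_decode m of (t, k) \<Rightarrow>
     (if t = 0 then
        (case prod_decode k of (a, k1) \<Rightarrow> case prod_decode k1 of (b, k2) \<Rightarrow>
           case prod_decode k2 of (c, d) \<Rightarrow> rect (rat_dec a) (rat_dec b) (rat_dec c) (rat_dec d))
      else ext_disk (rat_dec k)))"

text \<open>Sets listed by a sequence; symbol 0 is a blank, Suc m lists bset m.\<close>
definition listed :: "(nat \<Rightarrow> nat) \<Rightarrow> complex option set set" where
  "listed q = {bset m | m. \<exists>k. q k = Suc m}"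

definition pt_name :: "complex option \<Rightarrow> (nat \<Rightarrow> nat) \<Rightarrow> bool" where
  "pt_name z q \<longleftrightarrow> listed q = {B \<in> range bset. z \<in> B}"

definition cl_name :: "complex option set \<Rightarrow> (nat \<Rightarrow> nat) \<Rightarrow> bool" where
  "cl_name C q \<longleftrightarrow> listed q = {B \<in> range bset. B \<inter> C \<noteq> {}}"

definition fun_name :: "complex option set \<Rightarrow> (complex option \<Rightarrow> complex option) \<Rightarrow> nat set \<Rightarrow> rf \<Rightarrow> bool" where
  "fun_name U f X p \<longleftrightarrow>
     (\<forall>z\<in>U. \<forall>q. pt_name z q \<longrightarrow> (\<exists>r. computes p (join (chi X) q) r \<and> pt_name (f z) r))"

definition fseq :: "nat set \<Rightarrow> rf \<Rightarrow> nat \<Rightarrow> nat" where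
  "fseq X p k = (if k = 0 then rf_enc p else chi X (k - 1))"

end

theory Submission
  imports Defs
begin

text \<open>
  The machine dovetails over an index \<open>j\<close> into the name of \<open>C\<close>, an input position \<open>nn\<close>
  of the program \<open>p\<close> of \<open>f\<close> and a step bound \<open>t\<close>. If the \<open>j\<close>-th listed set is the basic
  set \<open>A\<close>, it runs \<open>p\<close> for \<open>t\<close> steps on \<open>nn\<close>, answering the point name with the basic sets
  that a decidable test on codes certifies to contain \<open>A\<close>, and lists the basic set that \<open>p\<close>
  outputs if it halts.

  Such a halting run reads only a finite prefix of its oracle, so it is also a run of \<open>p\<close> on a
  genuine name of a point \<open>z \<in> A \<inter> C\<close>: everything listed meets \<open>f[C]\<close>. Conversely, if
  \<open>f z \<in> B\<close> with \<open>z \<in> C\<close>, then \<open>p\<close> lists \<open>B\<close> after reading a finite prefix of the canonical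
  name of \<open>z\<close>; a rational rectangle (or exterior disk) around \<open>z\<close> that is small enough for
  the test to be exact on that prefix meets \<open>C\<close>, hence is listed.

  Programs are given in a mu-recursive oracle model, so simulating them for \<open>t\<close> steps needs a
  universal interpreter: a small-step stack machine whose transition function, on codes of
  states, is again given by a program.
\<close>

section \<open>Programs for arithmetic\<close>

lemma eval_ProjI: "i < length xs \<Longrightarrow> y = xs ! i \<Longrightarrow> eval g (Proj i) xs y"
  using ev_proj by simp
lemma eval_SucI: "y = Suc (arg0 xs) \<Longrightarrow> eval g Suc_rf xs y"
  using ev_suc by simp
lemma eval_ZerI: "y = 0 \<Longrightarrow> eval g Zer xs y"
  using ev_zer by simp
lemma eval_OrcI: "y = g (arg0 xs) \<Longrightarrow> eval g Orc xs y"
  using ev_orc by simp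
lemma eval_Comp1I: "eval g P xs a \<Longrightarrow> eval g f [a] y
    \<Longrightarrow> eval g (Comp f [P]) xs y"
  by (rule ev_comp[where ys="[a]"]) auto
lemma eval_Comp2I: "eval g P xs a \<Longrightarrow> eval g Q xs b \<Longrightarrow> eval g f [a,b] y
    \<Longrightarrow> eval g (Comp f [P,Q]) xs y"
  by (rule ev_comp[where ys="[a,b]"]) auto
definition add_rf :: rf where "add_rf = Prim (Proj 0) (Comp Suc_rf [Proj 0])"
lemma eval_add_rf_eq: "eval g add_rf [n, x] (n + x)"
proof (induction n)
  case 0 show ?case unfolding add_rf_def by (rule ev_prim0, rule eval_ProjI) auto
next
  case (Suc n)
  show ?case unfolding add_rf_def
    by (rule ev_primS[OF Suc[unfolded add_rf_def]], rule eval_Comp1I, rule eval_ProjI)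
      (auto intro!: eval_SucI simp: arg0_def)
qed
lemma eval_add_rf: "y = n + x \<Longrightarrow> eval g add_rf [n, x] y" using eval_add_rf_eq by simp

definition mult_rf :: rf where "mult_rf = Prim Zer (Comp add_rf [Proj 0, Proj 2])"
lemma eval_mult_rf_eq: "eval g mult_rf [n, x] (n * x)"
proof (induction n)
  case 0 show ?case unfolding mult_rf_def by (rule ev_prim0, rule eval_ZerI) auto
next
  case (Suc n)
  show ?case unfolding mult_rf_def
    by (rule ev_primS[OF Suc[unfolded mult_rf_def]], rule eval_Comp2I, (rule eval_ProjI, simp,
        simp)+, rule eval_add_rf) simp
qed
lemma eval_mult_rf: "y = n * x \<Longrightarrow> eval g mult_rf [n, x] y" using eval_mult_rf_eq by simp

definition pred_rf :: rf where "pred_rf = Prim Zer (Proj 1)"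
lemma eval_pred_rf_eq: "eval g pred_rf [n] (n - 1)"
proof (cases n)
  case 0 show ?thesis unfolding pred_rf_def 0 by (rule ev_prim0, rule eval_ZerI) auto
next
  case (Suc m)
  have "eval g (Prim Zer (Proj 1)) [m] (m - 1)"
  proof (induction m)
    case 0 show ?case by (rule ev_prim0, rule eval_ZerI) auto
  next
    case (Suc k) show ?case by (rule ev_primS[OF Suc], rule eval_ProjI) auto
  qed
  then show ?thesis unfolding pred_rf_def Suc by (rule ev_primS, intro eval_ProjI) auto
qed
lemma eval_pred_rf: "y = n - 1 \<Longrightarrow> eval g pred_rf [n] y" using eval_pred_rf_eq by simp

definition rsub_rf :: rf where "rsub_rf = Prim (Proj 0) (Comp pred_rf [Proj 0])"
lemma eval_rsub_rf: "eval g rsub_rf [b, a] (a - b)"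
proof (induction b)
  case 0 show ?case unfolding rsub_rf_def by (rule ev_prim0, rule eval_ProjI) auto
next
  case (Suc n)
  show ?case unfolding rsub_rf_def
    by (rule ev_primS[OF Suc[unfolded rsub_rf_def]], rule eval_Comp1I, rule eval_ProjI, simp, simp,
        rule eval_pred_rf) simp
qed
definition sub_rf :: rf where "sub_rf = Comp rsub_rf [Proj 1, Proj 0]"
lemma eval_sub_rf: "y = a - b \<Longrightarrow> eval g sub_rf [a, b] y"
  unfolding sub_rf_def by (rule eval_Comp2I, (rule eval_ProjI, simp, simp)+) (simp add: eval_rsub_rf)

definition triangle_rf :: rf where "triangle_rf = Prim Zer (Comp add_rf [Proj 0, Comp Suc_rf [Proj 1]])"
lemma eval_triangle_rf_eq: "eval g triangle_rf [n] (triangle n)"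
proof (induction n)
  case 0 show ?case unfolding triangle_rf_def by (rule ev_prim0, rule eval_ZerI) auto
next
  case (Suc n)
  show ?case unfolding triangle_rf_def
    by (rule ev_primS[OF Suc[unfolded triangle_rf_def]], rule eval_Comp2I, rule eval_ProjI, simp, simp,
        rule eval_Comp1I, rule eval_ProjI, simp, simp, rule eval_SucI, simp add: arg0_def, rule eval_add_rf) simp
qed
lemma eval_triangle_rf: "y = triangle n
    \<Longrightarrow> eval g triangle_rf [n] y" using eval_triangle_rf_eq by simp

definition pair_rf :: rf where
  "pair_rf = Comp add_rf [Comp triangle_rf [Comp add_rf [Proj 0, Proj 1]], Proj 0]"
lemma eval_pair_rf: "y = prod_encode (a, b) \<Longrightarrow> eval g pair_rf [a, b] y"
proof -
  assume y: "y = prod_encode (a, b)"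
  have 1: "eval g (Comp add_rf [Proj 0, Proj 1]) [a,b] (a+b)"
    by (rule eval_Comp2I, (rule eval_ProjI, simp, simp)+, rule eval_add_rf, rule refl)
  have 2: "eval g (Comp triangle_rf [Comp add_rf [Proj 0, Proj 1]]) [a,b] (triangle (a+b))"
    by (rule eval_Comp1I[OF 1], rule eval_triangle_rf, rule refl)
  show ?thesis unfolding pair_rf_def
    by (rule eval_Comp2I[OF 2], rule eval_ProjI, simp, simp, rule eval_add_rf) (simp add: y
        prod_encode_def)
qed

section \<open>Uniformly computable functionals\<close>

definition computable :: "((nat \<Rightarrow> nat) \<Rightarrow> nat \<Rightarrow> nat) \<Rightarrow> bool" where
  "computable F \<longleftrightarrow> (\<exists>P. \<forall>g x. eval g P [x] (F g x))"

lemma computableI: "(\<And>g x. eval g P [x] (F g x)) \<Longrightarrow> computable F"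
  unfolding computable_def by blast

fun const_rf :: "nat \<Rightarrow> rf" where
  "const_rf 0 = Zer" | "const_rf (Suc c) = Comp Suc_rf [const_rf c]"
lemma eval_const_rf: "eval g (const_rf c) [x] c"
proof (induction c)
  case 0 show ?case by (simp, rule eval_ZerI, rule refl)
next
  case (Suc c) show ?case by (simp, rule eval_Comp1I[OF Suc.IH], rule eval_SucI) (simp add: arg0_def)
qed

lemma computable_const: "computable (\<lambda>g x. c)"
  by (rule computableI[OF eval_const_rf])
lemma computable_id: "computable (\<lambda>g x. x)"
  by (rule computableI[of "Proj 0"], rule eval_ProjI) auto

lemma computable_unary: assumes "\<And>g a. eval g R [a] (h a)" "computable F" shows "computable (\<lambda>g x. h (F g x))"
proof -
  obtain P where P: "\<And>g x. eval g P [x] (F g x)" using assms(2) unfolding computable_def by blast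
  show ?thesis by (rule computableI[of "Comp R [P]"], rule eval_Comp1I[OF P assms(1)])
qed
lemma computable_binary: assumes "\<And>g a b. eval g R [a, b] (h a b)" "computable F" "computable G"
  shows "computable (\<lambda>g x. h (F g x) (G g x))"
proof -
  obtain P where P: "\<And>g x. eval g P [x] (F g x)" using assms(2) unfolding computable_def by blast
  obtain Q where Q: "\<And>g x. eval g Q [x] (G g x)" using assms(3) unfolding computable_def by blast
  show ?thesis by (rule computableI[of "Comp R [P, Q]"], rule eval_Comp2I[OF P Q assms(1)])
qed
lemma computable_oracle: assumes "computable F" shows "computable (\<lambda>g x. g (F g x))"
proof -
  obtain P where P: "\<And>g x. eval g P [x] (F g x)" using assms unfolding computable_def by blast
  show ?thesis by (rule computableI[of "Comp Orc [P]"], rule eval_Comp1I[OF P], rule eval_OrcI) (simp add: arg0_def)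
qed
lemma computable_suc: "computable F \<Longrightarrow> computable (\<lambda>g x. Suc (F g x))"
  by (rule computable_unary[where R=Suc_rf], rule eval_SucI) (auto simp: arg0_def)
lemma computable_add: "computable F \<Longrightarrow> computable G
    \<Longrightarrow> computable (\<lambda>g x. F g x + G g x)"
  by (rule computable_binary[where R=add_rf], rule eval_add_rf) auto
lemma computable_mult: "computable F \<Longrightarrow> computable G
    \<Longrightarrow> computable (\<lambda>g x. F g x * G g x)"
  by (rule computable_binary[where R=mult_rf], rule eval_mult_rf) auto
lemma computable_sub: "computable F \<Longrightarrow> computable G
    \<Longrightarrow> computable (\<lambda>g x. F g x - G g x)"
  by (rule computable_binary[where R=sub_rf], rule eval_sub_rf) auto
lemma computable_triangle: "computable F \<Longrightarrow> computable (\<lambda>g x. triangle (F g x))"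
  by (rule computable_unary[where R=triangle_rf], rule eval_triangle_rf) auto

definition npair :: "nat \<Rightarrow> nat \<Rightarrow> nat" where "npair a b = prod_encode (a, b)"
definition nfst :: "nat \<Rightarrow> nat" where "nfst n = fst (prod_decode n)"
definition nsnd :: "nat \<Rightarrow> nat" where "nsnd n = snd (prod_decode n)"
lemma nfst_npair[simp]: "nfst (npair a b) = a" and nsnd_npair[simp]: "nsnd (npair a b) = b"
  by (simp_all add: nfst_def nsnd_def npair_def)
lemma npair_nfst_nsnd: "npair (nfst n) (nsnd n) = n"
  by (simp add: nfst_def nsnd_def npair_def)
lemma computable_npair: "computable F \<Longrightarrow> computable G
    \<Longrightarrow> computable (\<lambda>g x. npair (F g x) (G g x))"
  by (rule computable_binary[where R=pair_rf], rule eval_pair_rf) (auto simp: npair_def)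

definition triangle_root :: "nat \<Rightarrow> nat" where
  "triangle_root n = (LEAST s. n < triangle (Suc s))"

lemma triangle_mono: "a \<le> b \<Longrightarrow> triangle a \<le> triangle b"
  by (induction b) (auto simp: le_Suc_eq)

lemma triangle_root_npair: "triangle_root (npair a b) = a + b"
proof -
  have n: "npair a b = triangle (a + b) + a" by (simp add: npair_def prod_encode_def)
  show ?thesis unfolding triangle_root_def
  proof (rule Least_equality)
    show "npair a b < triangle (Suc (a + b))" using n by simp
  next
    fix s assume "npair a b < triangle (Suc s)"
    then have "triangle (a+b) < triangle (Suc s)" using n by simp
    then show "a + b \<le> s" using triangle_mono[of "Suc s" "a+b"] by (metis not_less_eq_eq not_le)
  qed
qed

lemma nfst_eq: "nfst n = n - triangle (triangle_root n)"
  by (subst (1 2) npair_nfst_nsnd[of n, symmetric], simp only: triangle_root_npair nfst_npair)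
      (simp add: npair_def prod_encode_def)
lemma nsnd_eq: "nsnd n = triangle_root n - nfst n"
  by (subst (1 2) npair_nfst_nsnd[of n, symmetric], simp only: triangle_root_npair nfst_npair
      nsnd_npair)

definition triangle_root_rf :: rf where
  "triangle_root_rf = Mu (Comp sub_rf [Comp Suc_rf [Proj 1], Comp triangle_rf [Comp Suc_rf [Proj 0]]])"
lemma eval_triangle_root_rf: "eval g triangle_root_rf [n] (triangle_root n)"
proof -
  let ?f = "Comp sub_rf [Comp Suc_rf [Proj 1], Comp triangle_rf [Comp Suc_rf [Proj 0]]]"
  have e: "eval g ?f [k, n] (Suc n - triangle (Suc k))" for k
    by (rule eval_Comp2I, rule eval_Comp1I, rule eval_ProjI, simp, simp, rule eval_SucI,
        simp add: arg0_def, rule eval_Comp1I, rule eval_Comp1I, rule eval_ProjI, simp, simp,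
        rule eval_SucI, simp add: arg0_def,
        rule eval_triangle_rf, rule refl, rule eval_sub_rf, rule refl)
  have ex: "\<exists>s. n < triangle (Suc s)"
    by (rule exI[of _ n]) (simp add: triangle_def)
  have l: "n < triangle (Suc (triangle_root n))" unfolding triangle_root_def by (rule LeastI_ex[OF ex])
  have m: "m < triangle_root n
      \<Longrightarrow> \<not> n < triangle (Suc m)" for m unfolding triangle_root_def by (rule not_less_Least)
  show ?thesis unfolding triangle_root_rf_def
  proof (rule ev_mu)
    show "eval g ?f [triangle_root n, n] 0" using e[of "triangle_root n"] l by simp
    show "\<forall>m<triangle_root n. \<exists>y. eval g ?f [m, n] (Suc y)"
    proof (intro allI impI)
      fix m assume "m < triangle_root n"
      have "\<not> n < triangle (Suc m)" by (rule m) fact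
      then have "Suc n - triangle (Suc m) > 0" by linarith
      then show "\<exists>y. eval g ?f [m, n] (Suc y)" using e[of m] by (metis gr0_conv_Suc)
    qed
  qed
qed
lemma computable_triangle_root: "computable F
    \<Longrightarrow> computable (\<lambda>g x. triangle_root (F g x))"
  by (rule computable_unary[where R=triangle_root_rf], rule eval_triangle_root_rf)

lemma computable_nfst: "computable F \<Longrightarrow> computable (\<lambda>g x. nfst (F g x))"
  unfolding nfst_eq by (intro computable_sub computable_triangle computable_triangle_root)
lemma computable_nsnd: "computable F \<Longrightarrow> computable (\<lambda>g x. nsnd (F g x))"
  unfolding nsnd_eq by (intro computable_sub computable_triangle_root computable_nfst)

lemma computable_Least:
  assumes Q: "\<And>K X. computable K \<Longrightarrow> computable X
      \<Longrightarrow> computable (\<lambda>g y. Q g (K g y) (X g y))"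
    and ex: "\<And>g x. \<exists>k. Q g k x = 0"
  shows "computable (\<lambda>g x. LEAST k. Q g k x = 0)"
proof -
  have "computable (\<lambda>g y. Q g (nfst y) (nsnd y))" by (rule Q; rule computable_nfst computable_nsnd; rule computable_id)
  then obtain P where P: "\<And>g y. eval g P [y] (Q g (nfst y) (nsnd y))" unfolding computable_def by blast
  let ?f = "Comp P [Comp pair_rf [Proj 0, Proj 1]]"
  have e: "eval g ?f [k, x] (Q g k x)" for g k x
    by (rule eval_Comp1I, rule eval_Comp2I, (rule eval_ProjI, simp, simp)+, rule eval_pair_rf, rule refl)
       (use P[of g "prod_encode (k,x)"] in \<open>simp add: npair_def[symmetric]\<close>)
  show ?thesis
  proof (rule computableI[of "Mu ?f"], rule ev_mu)
    fix g x
    have "Q g (LEAST k. Q g k x = 0) x = 0" by (rule LeastI_ex[OF ex[of g x]])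
    then show "eval g ?f [LEAST k. Q g k x = 0, x] 0" using e[of g "LEAST k. Q g k x = 0" x] by simp
    show "\<forall>m<(LEAST k. Q g k x = 0). \<exists>y. eval g ?f [m, x] (Suc y)"
    proof (intro allI impI)
      fix m assume "m < (LEAST k. Q g k x = 0)"
      then have "Q g m x \<noteq> 0" by (rule not_less_Least)
      then obtain y where "Q g m x = Suc y" using not0_implies_Suc by blast
      then show "\<exists>y. eval g ?f [m, x] (Suc y)" using e[of g m x] by auto
    qed
  qed
qed

fun nat_iter :: "(nat \<Rightarrow> nat \<Rightarrow> nat) \<Rightarrow> nat \<Rightarrow> nat \<Rightarrow> nat" where
  "nat_iter h s 0 = s" | "nat_iter h s (Suc k) = h k (nat_iter h s k)"

lemma computable_nat_iter:
  assumes N: "computable N" and S: "computable S"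
    and H: "\<And>X K V. computable X \<Longrightarrow> computable K \<Longrightarrow> computable V
        \<Longrightarrow> computable (\<lambda>g y. H g (X g y) (K g y) (V g y))"
  shows "computable (\<lambda>g x. nat_iter (H g x) (S g x) (N g x))"
proof -
  have "computable (\<lambda>g y. H g (nfst y) (nfst (nsnd y)) (nsnd (nsnd y)))"
    by (rule H; (rule computable_nfst computable_nsnd)+; rule computable_id)
  then obtain PH where PH: "\<And>g y. eval g PH [y] (H g (nfst y) (nfst (nsnd y)) (nsnd (nsnd y)))"
    unfolding computable_def by blast
  obtain PS where PS: "\<And>g x. eval g PS [x] (S g x)" using S unfolding computable_def by blast
  obtain PN where PN: "\<And>g x. eval g PN [x] (N g x)" using N unfolding computable_def by blast
  let ?h = "Comp PH [Comp pair_rf [Proj 2, Comp pair_rf [Proj 1, Proj 0]]]"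
  have eh: "eval g ?h [r, k, x] (H g x k r)" for g r k x
    by (rule eval_Comp1I, rule eval_Comp2I, rule eval_ProjI, simp, simp, rule eval_Comp2I,
        (rule eval_ProjI, simp, simp)+,
        rule eval_pair_rf, rule refl, rule eval_pair_rf, rule refl)
       (use PH[of g "prod_encode (x, prod_encode (k, r))"] in \<open>simp add: npair_def[symmetric]\<close>)
  have ep: "eval g (Prim PS ?h) [k, x] (nat_iter (H g x) (S g x) k)" for g k x
  proof (induction k)
    case 0 show ?case by (simp, rule ev_prim0, rule PS)
  next
    case (Suc k) show ?case unfolding nat_iter.simps by (rule ev_primS[OF Suc.IH], rule eh)
  qed
  show ?thesis
  proof (rule computableI)
    fix g x
    have pr: "eval g (Proj 0) [x] x" by (rule eval_ProjI) auto
    show "eval g (Comp (Prim PS ?h) [PN, Proj 0]) [x] (nat_iter (H g x) (S g x) (N g x))"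
      by (rule eval_Comp2I[OF PN[of g x] pr ep[of g "N g x" x]])
  qed
qed

definition decidable :: "((nat \<Rightarrow> nat) \<Rightarrow> nat \<Rightarrow> bool) \<Rightarrow> bool" where
  "decidable P \<longleftrightarrow> computable (\<lambda>g x. of_bool (P g x))"

lemma computable_cong: "computable F \<Longrightarrow> (\<And>g x. F g x = G g x)
    \<Longrightarrow> computable G"
proof -
  assume "computable F" "\<And>g x. F g x = G g x"
  then have "F = G" by (auto simp: fun_eq_iff)
  with \<open>computable F\<close> show ?thesis by simp
qed

lemma decidable_cong: "decidable P \<Longrightarrow> (\<And>g x. P g x \<longleftrightarrow> Q g x)
    \<Longrightarrow> decidable Q"
  unfolding decidable_def by (erule computable_cong) simp
lemma decidable_less: "computable F \<Longrightarrow> computable G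
    \<Longrightarrow> decidable (\<lambda>g x. F g x < G g x)"
  unfolding decidable_def
  by (rule computable_cong[of "\<lambda>g x. 1 - (1 - (G g x - F g x))"], intro computable_sub computable_const) auto
lemma decidable_not: "decidable P \<Longrightarrow> decidable (\<lambda>g x. \<not> P g x)"
  unfolding decidable_def
  by (rule computable_cong[of "\<lambda>g x. 1 - of_bool (P g x)"], intro computable_sub computable_const) auto
lemma decidable_conj: "decidable P \<Longrightarrow> decidable Q
    \<Longrightarrow> decidable (\<lambda>g x. P g x \<and> Q g x)"
  unfolding decidable_def
  by (rule computable_cong[of "\<lambda>g x. of_bool (P g x) * of_bool (Q g x)"], intro computable_mult) auto
lemma decidable_disj: "decidable P \<Longrightarrow> decidable Q
    \<Longrightarrow> decidable (\<lambda>g x. P g x \<or> Q g x)"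
  unfolding decidable_def
  by (rule computable_cong[of "\<lambda>g x. 1 - (1 - of_bool (P g x)) * (1 - of_bool (Q g x))"],
      intro computable_sub computable_mult computable_const) auto
lemma decidable_le: "computable F \<Longrightarrow> computable G
    \<Longrightarrow> decidable (\<lambda>g x. F g x \<le> G g x)"
  by (rule decidable_cong[of "\<lambda>g x. \<not> G g x < F g x"], rule decidable_not, rule decidable_less) auto
lemma decidable_eq: "computable F \<Longrightarrow> computable G
    \<Longrightarrow> decidable (\<lambda>g x. F g x = G g x)"
proof -
  assume a: "computable F" "computable G"
  have "decidable (\<lambda>g x. F g x \<le> G g x
      \<and> G g x \<le> F g x)" by (intro decidable_conj decidable_le a)
  then show ?thesis by (rule decidable_cong) auto
qed
lemma decidable_imp: "decidable P \<Longrightarrow> decidable Q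
    \<Longrightarrow> decidable (\<lambda>g x. P g x \<longrightarrow> Q g x)"
  by (rule decidable_cong[of "\<lambda>g x. \<not> P g x
      \<or> Q g x"], rule decidable_disj, rule decidable_not) auto
lemma decidable_iff: "decidable P \<Longrightarrow> decidable Q
    \<Longrightarrow> decidable (\<lambda>g x. P g x \<longleftrightarrow> Q g x)"
proof -
  assume a: "decidable P" "decidable Q"
  have "decidable (\<lambda>g x. (P g x \<longrightarrow> Q g x)
      \<and> (Q g x \<longrightarrow> P g x))" by (intro decidable_conj decidable_imp a)
  then show ?thesis by (rule decidable_cong) auto
qed
lemma decidable_if: "decidable P \<Longrightarrow> decidable Q \<Longrightarrow> decidable R
    \<Longrightarrow> decidable (\<lambda>g x. if P g x then Q g x else R g x)"
proof -
  assume a: "decidable P" "decidable Q" "decidable R"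
  have "decidable (\<lambda>g x. (P g x \<and> Q g x)
      \<or> (\<not> P g x \<and> R g x))" by (intro decidable_disj decidable_conj decidable_not a)
  then show ?thesis by (rule decidable_cong) auto
qed
lemma computable_if: "decidable P \<Longrightarrow> computable F \<Longrightarrow> computable G
    \<Longrightarrow> computable (\<lambda>g x. if P g x then F g x else G g x)"
  unfolding decidable_def
  by (rule computable_cong[of "\<lambda>g x. of_bool (P g x) * F g x + (1 - of_bool (P g x)) * G g x"],
      intro computable_add computable_mult computable_sub computable_const) auto
lemma computable_of_bool: "decidable P \<Longrightarrow> computable (\<lambda>g x. of_bool (P g x))"
  unfolding decidable_def .

lemma computable_comp: assumes "computable H" "computable F" shows "computable (\<lambda>g x. H g (F g x))"
proof -
  obtain P where P: "\<And>g x. eval g P [x] (H g x)" using assms(1) unfolding computable_def by blast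
  obtain Q where Q: "\<And>g x. eval g Q [x] (F g x)" using assms(2) unfolding computable_def by blast
  show ?thesis by (rule computableI[of "Comp P [Q]"], rule eval_Comp1I[OF Q P])
qed

lemma computable_div2: "computable F \<Longrightarrow> computable (\<lambda>g x. F g x div 2)"
proof -
  assume F: "computable F"
  have ex: "\<exists>k. x - (2 * k + 1) = 0" for x :: nat by (rule exI[of _ x]) simp
  have "computable (\<lambda>g x. LEAST k. x - (2 * k + 1) = 0)"
    by (rule computable_Least[where Q="\<lambda>g k x. x - (2*k+1)", OF _ ex],
        intro computable_sub computable_add computable_mult computable_const, assumption+)
  moreover have "(LEAST k. x - (2 * k + 1) = 0) = x div 2" for x :: nat
  proof (rule Least_equality)
    show "x - (2 * (x div 2) + 1) = 0" by presburger
    fix y assume "x - (2 * y + 1) = 0" then show "x div 2 \<le> y" by presburger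
  qed
  ultimately have "computable (\<lambda>g x. x div 2)" by (rule computable_cong)
  from computable_comp[OF this F] show ?thesis .
qed

lemma decidable_even: "computable F \<Longrightarrow> decidable (\<lambda>g x. even (F g x))"
proof -
  assume F: "computable F"
  have "decidable (\<lambda>g x. F g x = 2 * (F g x div 2))"
    by (intro decidable_eq computable_mult computable_const computable_div2 F)
  moreover have e: "(n = 2 * (n div 2)) = even n" for n :: nat by presburger
  ultimately show ?thesis by (rule decidable_cong)
qed

section \<open>Codes of lists\<close>

definition lcons :: "nat \<Rightarrow> nat \<Rightarrow> nat" where "lcons x l = Suc (npair x l)"
definition lhd :: "nat \<Rightarrow> nat" where "lhd l = nfst (l - 1)"
definition ltl :: "nat \<Rightarrow> nat" where "ltl l = nsnd (l - 1)"

lemma lhd_lcons[simp]: "lhd (lcons x l) = x" and ltl_lcons[simp]: "ltl (lcons x l) = l"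
  by (simp_all add: lhd_def ltl_def lcons_def)
lemma lcons_nz[simp]: "lcons x l \<noteq> 0" by (simp add: lcons_def)
lemma list_encode_Cons': "list_encode (x # xs) = lcons x (list_encode xs)"
  by (simp add: lcons_def npair_def)
declare list_encode.simps(2)[simp del] list_encode_Cons'[simp]
lemma list_encode_eq0[simp]: "list_encode xs = 0 \<longleftrightarrow> xs = []"
  by (cases xs) auto
lemma prod_decode_0: "prod_decode 0 = (0, 0)"
  using prod_encode_inverse[of "(0,0)"] by (simp add: prod_encode_def)
lemma ltl_0[simp]: "ltl 0 = 0"
  unfolding ltl_def nsnd_def using prod_decode_0 by simp
lemma lhd_0[simp]: "lhd 0 = 0"
  unfolding lhd_def nfst_def using prod_decode_0 by simp
lemma ltl_enc: "ltl (list_encode xs) = list_encode (tl xs)"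
  by (cases xs) (simp_all del: list_encode.simps add: list_encode.simps(1) list_encode_Cons')
lemma lhd_enc: "xs \<noteq> [] \<Longrightarrow> lhd (list_encode xs) = hd xs"
  by (cases xs) (simp_all del: list_encode.simps add: list_encode_Cons')

lemma triangle_ge: "n \<le> triangle n"
  by (induction n) auto
lemma nsnd_le: "nsnd n \<le> n"
proof -
  have "n = npair (nfst n) (nsnd n)" by (simp add: npair_nfst_nsnd)
  also have "\<dots> = triangle (nfst n + nsnd n) + nfst n" by (simp add: npair_def prod_encode_def)
  finally show ?thesis using triangle_ge[of "nfst n + nsnd n"] by linarith
qed
lemma le_npair: "b \<le> npair a b"
  using nsnd_le[of "npair a b"] by simp
lemma ltl_less: "l \<noteq> 0 \<Longrightarrow> ltl l < l"
  unfolding ltl_def using nsnd_le[of "l - 1"] by linarith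
definition ldrop :: "nat \<Rightarrow> nat \<Rightarrow> nat" where
  "ldrop l k = nat_iter (\<lambda>_ s. ltl s) l k"
lemma ldrop_enc: "ldrop (list_encode xs) k = list_encode (drop k xs)"
  unfolding ldrop_def by (induction k) (auto simp: ltl_enc drop_Suc tl_drop)
lemma ldrop_le_diff: "ldrop l k \<le> l - k"
proof (induction k)
  case 0 show ?case by (simp add: ldrop_def)
next
  case (Suc k)
  have "ldrop l (Suc k) = ltl (ldrop l k)" by (simp add: ldrop_def)
  moreover have "ltl (ldrop l k) < ldrop l k \<or> ldrop l k = 0" using ltl_less by blast
  ultimately show ?case using Suc by auto
qed

definition lnth :: "nat \<Rightarrow> nat \<Rightarrow> nat" where "lnth l i = lhd (ldrop l i)"
lemma lnth_enc: "i < length xs \<Longrightarrow> lnth (list_encode xs) i = xs ! i"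
  by (simp add: lnth_def ldrop_enc lhd_enc hd_drop_conv_nth)

definition llen :: "nat \<Rightarrow> nat" where "llen l = (LEAST k. ldrop l k = 0)"
lemma llen_enc: "llen (list_encode xs) = length xs"
  unfolding llen_def ldrop_enc
  by (rule Least_equality) auto

definition lrev_step :: "nat \<Rightarrow> nat \<Rightarrow> nat" where
  "lrev_step k s = (if nfst s = 0 then s else npair (ltl (nfst s)) (lcons (lhd (nfst s)) (nsnd s)))"
definition lrev :: "nat \<Rightarrow> nat" where "lrev l = nsnd (nat_iter lrev_step (npair l 0) l)"

lemma nat_iter_lrev_step: "nat_iter lrev_step (npair (list_encode xs) 0) k = npair (list_encode (drop k xs)) (list_encode (rev (take k xs)))"
proof (induction k)
  case 0 show ?case by simp
next
  case (Suc k)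
  show ?case
  proof (cases "k < length xs")
    case True
    then obtain ys where d: "drop k xs = xs ! k # ys" by (metis Cons_nth_drop_Suc)
    then have d2: "drop (Suc k) xs = ys" by (metis drop_Suc list.sel(3) tl_drop)
    show ?thesis using True by (simp only: nat_iter.simps Suc.IH) (simp add: lrev_step_def d d2
        take_Suc_conv_app_nth)
  next
    case False
    then show ?thesis by (simp only: nat_iter.simps Suc.IH) (simp add: lrev_step_def)
  qed
qed
lemma list_encode_ge: "length xs \<le> list_encode xs"
proof (induction xs)
  case Nil then show ?case by simp
next
  case (Cons x xs) then show ?case using le_npair[of "list_encode xs" x] by (simp add: list_encode_Cons' lcons_def)
qed
lemma lrev_enc: "lrev (list_encode xs) = list_encode (rev xs)"
  unfolding lrev_def nat_iter_lrev_step using list_encode_ge[of xs] by simp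

definition lsnoc :: "nat \<Rightarrow> nat \<Rightarrow> nat" where "lsnoc l v = lrev (lcons v (lrev l))"
lemma lsnoc_enc: "lsnoc (list_encode xs) v = list_encode (xs @ [v])"
  unfolding lsnoc_def lrev_enc list_encode_Cons'[symmetric] lrev_enc by simp

lemma computable_lcons: "computable F \<Longrightarrow> computable G
    \<Longrightarrow> computable (\<lambda>g x. lcons (F g x) (G g x))"
  unfolding lcons_def by (intro computable_suc computable_npair)
lemma computable_lhd: "computable F \<Longrightarrow> computable (\<lambda>g x. lhd (F g x))"
  unfolding lhd_def by (intro computable_nfst computable_sub computable_const)
lemma computable_ltl: "computable F \<Longrightarrow> computable (\<lambda>g x. ltl (F g x))"
  unfolding ltl_def by (intro computable_nsnd computable_sub computable_const)
lemma computable_ldrop: "computable L \<Longrightarrow> computable K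
    \<Longrightarrow> computable (\<lambda>g x. ldrop (L g x) (K g x))"
  unfolding ldrop_def by (rule computable_nat_iter, assumption, assumption, rule computable_ltl)
lemma computable_lnth: "computable L \<Longrightarrow> computable K
    \<Longrightarrow> computable (\<lambda>g x. lnth (L g x) (K g x))"
  unfolding lnth_def by (intro computable_lhd computable_ldrop)
lemma computable_llen: "computable L \<Longrightarrow> computable (\<lambda>g x. llen (L g x))"
proof -
  assume L: "computable L"
  have ex: "\<exists>k. ldrop x k = 0" for x using ldrop_le_diff[of x x] by auto
  have "computable (\<lambda>g x. LEAST k. ldrop x k = 0)"
    by (rule computable_Least[where Q="\<lambda>g k x. ldrop x k", OF _ ex], rule computable_ldrop)
  then have "computable (\<lambda>g x. llen x)" unfolding llen_def .
  from computable_comp[OF this L] show ?thesis .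
qed
lemma computable_lrev: "computable L \<Longrightarrow> computable (\<lambda>g x. lrev (L g x))"
  unfolding lrev_def lrev_step_def
  by (rule computable_nsnd, rule computable_nat_iter, assumption,
      intro computable_npair computable_const, assumption,
      intro computable_if decidable_eq computable_npair computable_nfst computable_ltl computable_lcons
        computable_lhd computable_nsnd computable_const)
lemma computable_lsnoc: "computable L \<Longrightarrow> computable V
    \<Longrightarrow> computable (\<lambda>g x. lsnoc (L g x) (V g x))"
  unfolding lsnoc_def by (intro computable_lrev computable_lcons)

section \<open>A universal interpreter\<close>

text \<open>Pending work on the stack: \<open>FC f hs xs ys\<close> awaits the arguments of \<open>f\<close>, with \<open>ys\<close>
  computed and \<open>hs\<close> still to be run on \<open>xs\<close>; \<open>FP h n xs\<close> awaits the value at \<open>n\<close> of a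
  primitive recursion with step \<open>h\<close>; \<open>FM f k xs\<close> awaits \<open>f (k # xs)\<close> in a minimisation.
  States without a matching rule (ill-formed calls) are fixed points, as is a final value.\<close>

datatype frame = FC rf "rf list" "nat list" "nat list" | FP rf nat "nat list" | FM rf nat "nat list"
datatype mode = Ev rf "nat list" | Rt nat

fun step :: "(nat \<Rightarrow> nat) \<Rightarrow> mode \<times> frame list \<Rightarrow> mode \<times> frame list" where
  "step g (Ev Zer xs, st) = (Rt 0, st)"
| "step g (Ev Suc_rf xs, st) = (Rt (Suc (arg0 xs)), st)"
| "step g (Ev (Proj i) xs, st) = (if i < length xs then (Rt (xs ! i), st) else (Ev (Proj i) xs, st))"
| "step g (Ev Orc xs, st) = (Rt (g (arg0 xs)), st)"
| "step g (Ev (Comp f []) xs, st) = (Ev f [], st)"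
| "step g (Ev (Comp f (h # hs)) xs, st) = (Ev h xs, FC f hs xs [] # st)"
| "step g (Ev (Prim f h) [], st) = (Ev (Prim f h) [], st)"
| "step g (Ev (Prim f h) (0 # xs), st) = (Ev f xs, st)"
| "step g (Ev (Prim f h) (Suc n # xs), st) = (Ev (Prim f h) (n # xs), FP h n xs # st)"
| "step g (Ev (Mu f) xs, st) = (Ev f (0 # xs), FM f 0 xs # st)"
| "step g (Rt v, []) = (Rt v, [])"
| "step g (Rt v, FC f [] xs ys # st) = (Ev f (ys @ [v]), st)"
| "step g (Rt v, FC f (h # hs) xs ys # st) = (Ev h xs, FC f hs xs (ys @ [v]) # st)"
| "step g (Rt v, FP h n xs # st) = (Ev h (v # n # xs), st)"
| "step g (Rt v, FM f k xs # st) = (if v = 0 then (Rt k, st) else (Ev f (Suc k # xs), FM f (Suc k) xs # st))"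

definition run :: "(nat \<Rightarrow> nat) \<Rightarrow> nat \<Rightarrow> mode \<times> frame list \<Rightarrow> mode \<times> frame list" where
  "run g t s = (step g ^^ t) s"

lemma run_0[simp]: "run g 0 s = s" by (simp add: run_def)
lemma run_Suc: "run g (Suc t) s = run g t (step g s)"
  by (simp only: run_def funpow_Suc_right comp_apply)
lemma run_add: "run g (a + b) s = run g b (run g a s)"
  by (simp only: run_def add.commute[of a b] funpow_add comp_apply)
lemma run_step1: "run g 1 s = step g s" by (simp add: run_def)
lemma run_one[simp]: "run g (Suc 0) s = step g s" by (simp add: run_def)

lemma run_trans: "run g a s = s' \<Longrightarrow> run g b s' = s'' \<Longrightarrow> run g (a + b) s = s''"
  by (simp add: run_add)

definition runs_to :: "(nat \<Rightarrow> nat) \<Rightarrow> rf \<Rightarrow> nat list \<Rightarrow> nat \<Rightarrow> bool" where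
  "runs_to g p xs y \<longleftrightarrow> (\<forall>st. \<exists>t. run g t (Ev p xs, st) = (Rt y, st))"

lemma run_Comp_args:
  assumes "list_all2 (\<lambda>h y. runs_to g h xs y) (h # hs) (y # ys)"
  shows "\<exists>t. run g t (Ev h xs, FC f hs xs acc # st) = (Ev f (acc @ y # ys), st)"
  using assms
proof (induction hs arbitrary: h y ys acc)
  case Nil
  then have ys: "ys = []" by simp
  from Nil obtain t where t: "run g t (Ev h xs, FC f [] xs acc # st) = (Rt y, FC f [] xs acc # st)"
    by (auto simp: runs_to_def)
  have "run g (t + 1) (Ev h xs, FC f [] xs acc # st) = (Ev f (acc @ [y]), st)"
    by (rule run_trans[OF t]) (simp add: run_step1)
  then show ?case using ys by blast
next
  case (Cons h' hs)
  from Cons.prems obtain y' ys' where ys: "ys = y' # ys'" by (cases ys) auto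
  from Cons.prems obtain t where
    t: "run g t (Ev h xs, FC f (h' # hs) xs acc # st) = (Rt y, FC f (h' # hs) xs acc # st)"
    by (auto simp: runs_to_def)
  from Cons.prems ys obtain t2 where
    t2: "run g t2 (Ev h' xs, FC f hs xs (acc @ [y]) # st) = (Ev f ((acc @ [y]) @ y' # ys'), st)"
    using Cons.IH by fastforce
  have "run g (t + 1 + t2) (Ev h xs, FC f (h' # hs) xs acc # st) = (Ev f ((acc @ [y]) @ y' # ys'), st)"
    by (rule run_trans[OF run_trans[OF t] t2]) (simp add: run_step1)
  then show ?case using ys by auto
qed

lemma runs_to_Comp:
  assumes hs: "list_all2 (\<lambda>h y. runs_to g h xs y) hs ys" and f: "runs_to g f ys y"
  shows "runs_to g (Comp f hs) xs y"
  unfolding runs_to_def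
proof
  fix st
  from f obtain t2 where t2: "run g t2 (Ev f ys, st) = (Rt y, st)" by (auto simp: runs_to_def)
  show "\<exists>t. run g t (Ev (Comp f hs) xs, st) = (Rt y, st)"
  proof (cases hs)
    case Nil
    then have "run g (1 + t2) (Ev (Comp f hs) xs, st) = (Rt y, st)"
      using hs by (intro run_trans[OF _ t2]) (simp add: run_step1)
    then show ?thesis by blast
  next
    case (Cons h hs')
    with hs obtain y1 ys' where ys: "ys = y1 # ys'" by (cases ys) auto
    have "list_all2 (\<lambda>h y. runs_to g h xs y) (h # hs') (y1 # ys')" using hs ys Cons by simp
    from run_Comp_args[OF this, of f "[]" st] obtain t1 where
      t1: "run g t1 (Ev h xs, FC f hs' xs [] # st) = (Ev f (y1 # ys'), st)" by auto
    have "run g (1 + t1 + t2) (Ev (Comp f hs) xs, st) = (Rt y, st)"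
      using Cons ys by (intro run_trans[OF run_trans[OF _ t1] t2[unfolded ys]]) (simp add: run_step1)
    then show ?thesis by blast
  qed
qed

lemma run_Mu_search:
  assumes f0: "runs_to g f (n # xs) 0"
    and fs: "\<forall>m<n. \<exists>y. runs_to g f (m # xs) (Suc y)"
  shows "k \<le> n \<Longrightarrow> \<exists>t. run g t (Ev f (k # xs), FM f k xs # st) = (Rt n, st)"
proof (induction "n - k" arbitrary: k)
  case 0
  then have k: "k = n" by simp
  from f0 obtain t where t: "run g t (Ev f (n # xs), FM f n xs # st) = (Rt 0, FM f n xs # st)"
    by (auto simp: runs_to_def)
  have "run g (t + 1) (Ev f (n # xs), FM f n xs # st) = (Rt n, st)"
    by (rule run_trans[OF t]) (simp add: run_step1)
  then show ?case using k by blast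
next
  case (Suc d)
  then have kn: "k < n" by simp
  from fs kn obtain y where "runs_to g f (k # xs) (Suc y)" by blast
  then obtain t where t: "run g t (Ev f (k # xs), FM f k xs # st) = (Rt (Suc y), FM f k xs # st)"
    by (auto simp: runs_to_def)
  have d: "d = n - Suc k" using Suc.hyps(2) by arith
  from Suc.hyps(1)[OF d] kn obtain t2 where
    t2: "run g t2 (Ev f (Suc k # xs), FM f (Suc k) xs # st) = (Rt n, st)" by auto
  have "run g (t + 1 + t2) (Ev f (k # xs), FM f k xs # st) = (Rt n, st)"
    by (rule run_trans[OF run_trans[OF t] t2]) (simp add: run_step1)
  then show ?case by blast
qed

lemma eval_imp_runs_to: "eval g p xs y \<Longrightarrow> runs_to g p xs y"
proof (induction rule: eval.induct)
  case (ev_comp xs hs ys f y)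
  then show ?case by (intro runs_to_Comp) (auto elim: list_all2_mono)
next
  case (ev_prim0 f xs y h)
  show ?case unfolding runs_to_def
  proof
    fix st
    from ev_prim0.IH obtain t where t: "run g t (Ev f xs, st) = (Rt y, st)" by (auto simp: runs_to_def)
    have "run g (1 + t) (Ev (Prim f h) (0 # xs), st) = (Rt y, st)"
      by (intro run_trans[OF _ t]) (simp add: run_step1)
    then show "\<exists>t. run g t (Ev (Prim f h) (0 # xs), st) = (Rt y, st)" by blast
  qed
next
  case (ev_primS f h n xs r y)
  show ?case unfolding runs_to_def
  proof
    fix st
    from ev_primS.IH obtain t1 t2 where
      t1: "run g t1 (Ev (Prim f h) (n # xs), FP h n xs # st) = (Rt r, FP h n xs # st)" and
      t2: "run g t2 (Ev h (r # n # xs), st) = (Rt y, st)" by (meson runs_to_def)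
    have "run g (1 + t1 + 1 + t2) (Ev (Prim f h) (Suc n # xs), st) = (Rt y, st)"
      by (intro run_trans[OF run_trans[OF run_trans[OF _ t1]] t2]) (simp_all add: run_step1)
    then show "\<exists>t. run g t (Ev (Prim f h) (Suc n # xs), st) = (Rt y, st)" by blast
  qed
next
  case (ev_mu f n xs)
  show ?case unfolding runs_to_def
  proof
    fix st
    from run_Mu_search[of g f n xs 0 st] ev_mu.IH obtain t where
      t: "run g t (Ev f (0 # xs), FM f 0 xs # st) = (Rt n, st)" by blast
    have "run g (1 + t) (Ev (Mu f) xs, st) = (Rt n, st)"
      by (intro run_trans[OF _ t]) (simp add: run_step1)
    then show "\<exists>t. run g t (Ev (Mu f) xs, st) = (Rt n, st)" by blast
  qed
qed (auto simp: runs_to_def intro!: exI[of _ "Suc 0"])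

lemma run_halted: "run g t (Rt v, []) = (Rt v, [])"
  by (induction t) (simp_all add: run_Suc)

lemma run_halted_unique: "run g t1 s = (Rt a, []) \<Longrightarrow> run g t2 s = (Rt b, [])
    \<Longrightarrow> a = b"
proof (cases "t1 \<le> t2")
  case True
  assume 1: "run g t1 s = (Rt a, [])" and 2: "run g t2 s = (Rt b, [])"
  have "run g t2 s = run g (t2 - t1) (run g t1 s)" using True run_add[of g t1 "t2 - t1" s] by simp
  then show ?thesis using 1 2 run_halted by simp
next
  case False
  assume 1: "run g t1 s = (Rt a, [])" and 2: "run g t2 s = (Rt b, [])"
  have "run g t1 s = run g (t1 - t2) (run g t2 s)" using False run_add[of g t2 "t1 - t2" s] by simp
  then show ?thesis using 1 2 run_halted by simp
qed

fun oracle_query :: "mode \<times> frame list \<Rightarrow> nat" where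
  "oracle_query (Ev Orc xs, st) = arg0 xs"
| "oracle_query s = 0"

lemma step_oracle_query: "g' (oracle_query s) = g (oracle_query s) \<Longrightarrow> step g' s = step g s"
  by (induction g s rule: step.induct) auto

lemma run_oracle_prefix: "\<exists>N. \<forall>g'. (\<forall>k<N. g' k = g k) \<longrightarrow> run g' t s = run g t s"
proof (induction t arbitrary: s)
  case 0 show ?case by simp
next
  case (Suc t)
  from Suc.IH[of "step g s"] obtain N where N: "\<forall>g'. (\<forall>k<N. g' k = g k)
      \<longrightarrow> run g' t (step g s) = run g t (step g s)" by blast
  show ?case
  proof (rule exI[of _ "max N (Suc (oracle_query s))"], intro allI impI)
    fix g' assume a: "\<forall>k<max N (Suc (oracle_query s)). g' k = g k"
    then have st: "step g' s = step g s" by (intro step_oracle_query) auto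
    have a1: "\<forall>k<N. g' k = g k" using a by simp
    have r: "run g' t (step g s) = run g t (step g s)" using N a1 by blast
    show "run g' (Suc t) s = run g (Suc t) s" by (simp only: run_Suc st r)
  qed
qed

lemma rf_enc_npair:
  "rf_enc Zer = npair 0 0" "rf_enc Suc_rf = npair 1 0" "rf_enc (Proj i) = npair 2 i"
  "rf_enc (Comp f hs) = npair 3 (npair (rf_enc f) (list_encode (map rf_enc hs)))"
  "rf_enc (Prim f h) = npair 4 (npair (rf_enc f) (rf_enc h))"
  "rf_enc (Mu f) = npair 5 (rf_enc f)" "rf_enc Orc = npair 6 0"
  by (simp_all add: npair_def)
declare rf_enc.simps[simp del] rf_enc_npair[simp]

fun enc_mode :: "mode \<Rightarrow> nat" where
  "enc_mode (Ev p xs) = npair 0 (npair (rf_enc p) (list_encode xs))"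
| "enc_mode (Rt v) = npair 1 v"

fun enc_frame :: "frame \<Rightarrow> nat" where
  "enc_frame (FC f hs xs ys) = npair 0 (npair (rf_enc f) (npair (list_encode (map rf_enc hs)) (npair (list_encode xs) (list_encode ys))))"
| "enc_frame (FP h n xs) = npair 1 (npair (rf_enc h) (npair n (list_encode xs)))"
| "enc_frame (FM f k xs) = npair 2 (npair (rf_enc f) (npair k (list_encode xs)))"

definition enc_state :: "mode \<times> frame list \<Rightarrow> nat" where
  "enc_state s = npair (enc_mode (fst s)) (list_encode (map enc_frame (snd s)))"

definition arg0_code :: "nat \<Rightarrow> nat" where "arg0_code l = (if l = 0 then 0 else lhd l)"
lemma arg0_code_enc[simp]: "arg0_code (list_encode xs) = arg0 xs"
  by (cases xs) (simp_all add: arg0_code_def arg0_def)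

definition step_code_eval :: "(nat \<Rightarrow> nat) \<Rightarrow> nat \<Rightarrow> nat \<Rightarrow> nat \<Rightarrow> nat \<Rightarrow> nat" where
  "step_code_eval orc pc xs st x =
    (if nfst pc = 0 then npair (npair 1 0) st
     else if nfst pc = 1 then npair (npair 1 (Suc (arg0_code xs))) st
     else if nfst pc = 2 then (if nsnd pc < llen xs then npair (npair 1 (lnth xs (nsnd pc))) st else x)
     else if nfst pc = 3 then
       (if nsnd (nsnd pc) = 0 then npair (npair 0 (npair (nfst (nsnd pc)) 0)) st
        else npair (npair 0 (npair (lhd (nsnd (nsnd pc))) xs))
                (lcons (npair 0 (npair (nfst (nsnd pc)) (npair (ltl (nsnd (nsnd pc))) (npair xs 0)))) st))
     else if nfst pc = 4 then
       (if xs = 0 then x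
        else if lhd xs = 0 then npair (npair 0 (npair (nfst (nsnd pc)) (ltl xs))) st
        else npair (npair 0 (npair pc (lcons (lhd xs - 1) (ltl xs))))
                (lcons (npair 1 (npair (nsnd (nsnd pc)) (npair (lhd xs - 1) (ltl xs)))) st))
     else if nfst pc = 5 then
       npair (npair 0 (npair (nsnd pc) (lcons 0 xs))) (lcons (npair 2 (npair (nsnd pc) (npair 0 xs))) st)
     else if nfst pc = 6 then npair (npair 1 (orc (arg0_code xs))) st
     else x)"

definition step_code_return :: "nat \<Rightarrow> nat \<Rightarrow> nat \<Rightarrow> nat" where
  "step_code_return v st x =
    (if st = 0 then x
     else if nfst (lhd st) = 0 then
       (if nfst (nsnd (nsnd (lhd st))) = 0
        then npair (npair 0 (npair (nfst (nsnd (lhd st))) (lsnoc (nsnd (nsnd (nsnd (nsnd (lhd st))))) v))) (ltl st)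
        else npair (npair 0 (npair (lhd (nfst (nsnd (nsnd (lhd st))))) (nfst (nsnd (nsnd (nsnd (lhd st)))))))
                (lcons (npair 0 (npair (nfst (nsnd (lhd st))) (npair (ltl (nfst (nsnd (nsnd (lhd st)))))
                    (npair (nfst (nsnd (nsnd (nsnd (lhd st))))) (lsnoc (nsnd (nsnd (nsnd (nsnd (lhd st))))) v)))))
                  (ltl st)))
     else if nfst (lhd st) = 1 then
       npair (npair 0 (npair (nfst (nsnd (lhd st))) (lcons v (lcons (nfst (nsnd (nsnd (lhd st)))) (nsnd (nsnd (nsnd (lhd st)))))))) (ltl st)
     else
       (if v = 0 then npair (npair 1 (nfst (nsnd (nsnd (lhd st))))) (ltl st)
        else npair (npair 0 (npair (nfst (nsnd (lhd st))) (lcons (Suc (nfst (nsnd (nsnd (lhd st))))) (nsnd (nsnd (nsnd (lhd st)))))))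
                (lcons (npair 2 (npair (nfst (nsnd (lhd st))) (npair (Suc (nfst (nsnd (nsnd (lhd st))))) (nsnd (nsnd (nsnd (lhd st)))))))
                  (ltl st))))"

definition step_code :: "(nat \<Rightarrow> nat) \<Rightarrow> nat \<Rightarrow> nat" where
  "step_code orc x = (if nfst (nfst x) = 0
      then step_code_eval orc (nfst (nsnd (nfst x))) (nsnd (nsnd (nfst x))) (nsnd x) x
                  else step_code_return (nsnd (nfst x)) (nsnd x) x)"

lemma step_code_enc: "step_code orc (enc_state s) = enc_state (step orc s)"
  by (induction orc s rule: step.induct)
     (simp_all add: step_code_def step_code_eval_def step_code_return_def enc_state_def llen_enc lnth_enc lsnoc_enc)

lemma computable_arg0_code: "computable F \<Longrightarrow> computable (\<lambda>g x. arg0_code (F g x))"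
  unfolding arg0_code_def by (intro computable_if decidable_eq computable_const computable_lhd)

lemma computable_step_code:
  assumes Or: "\<And>K. computable K
      \<Longrightarrow> computable (\<lambda>g y. Or g y (K g y))" and X: "computable X"
  shows "computable (\<lambda>g y. step_code (Or g y) (X g y))"
  unfolding step_code_def step_code_eval_def step_code_return_def
  by (intro computable_if decidable_eq decidable_less computable_npair computable_nfst
      computable_nsnd computable_const computable_lcons computable_lhd computable_ltl
      computable_lnth
      computable_llen computable_lsnoc computable_suc computable_sub computable_arg0_code Or X)

definition run_code :: "(nat \<Rightarrow> nat) \<Rightarrow> nat \<Rightarrow> nat \<Rightarrow> nat" where
  "run_code orc t x = nat_iter (\<lambda>_ s. step_code orc s) x t"

lemma run_code_enc: "run_code orc t (enc_state s) = enc_state (run orc t s)"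
proof (induction t)
  case 0 show ?case by (simp add: run_code_def)
next
  case (Suc t)
  have "run orc (Suc t) s = step orc (run orc t s)"
    using run_add[of orc t 1 s] by (simp add: run_step1)
  then show ?case using Suc by (simp add: run_code_def step_code_enc)
qed

lemma computable_run_code:
  assumes Or: "\<And>K Y. computable K \<Longrightarrow> computable Y
      \<Longrightarrow> computable (\<lambda>g y. Or g (Y g y) (K g y))"
    and T: "computable T" and X: "computable X" and Z: "computable Z"
  shows "computable (\<lambda>g y. run_code (Or g (Z g y)) (T g y) (X g y))"
  unfolding run_code_def
  by (rule computable_nat_iter[OF T X], rule computable_step_code, (rule Or | rule
      computable_comp[OF Z] | assumption)+)

section \<open>Codes of rationals\<close>

definition int_pos_part :: "nat \<Rightarrow> nat" where
  "int_pos_part n = (if even n then n div 2 else 0)"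
definition int_neg_part :: "nat \<Rightarrow> nat" where
  "int_neg_part n = (if even n then 0 else n div 2 + 1)"

lemma int_decode_parts: "int_decode n = int (int_pos_part n) - int (int_neg_part n)"
  by (simp add: int_decode_def sum_decode_def int_pos_part_def int_neg_part_def)
lemma int_pos_neg_part: "int_pos_part n * int_neg_part n = 0"
  by (simp add: int_pos_part_def int_neg_part_def)

text \<open>A code \<open>u\<close> denotes \<open>Fract n d\<close> with \<open>n\<close>, \<open>d\<close> obtained by \<open>int_decode\<close>; it is written
  as \<open>(num_pos u - num_neg u) / den u\<close> with natural numbers, where \<open>den u = d\<^sup>2\<close>, or \<open>1\<close>
  if \<open>d = 0\<close> (recall \<open>Fract n 0 = 0\<close>).\<close>

definition num_pos :: "nat \<Rightarrow> nat" where
  "num_pos u = int_pos_part (nfst u) * int_pos_part (nsnd u)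
    + int_neg_part (nfst u) * int_neg_part (nsnd u)"
definition num_neg :: "nat \<Rightarrow> nat" where
  "num_neg u = int_pos_part (nfst u) * int_neg_part (nsnd u)
    + int_neg_part (nfst u) * int_pos_part (nsnd u)"
definition den :: "nat \<Rightarrow> nat" where
  "den u = (int_pos_part (nsnd u) + int_neg_part (nsnd u)) * (int_pos_part (nsnd u) + int_neg_part (nsnd u))
    + of_bool (int_pos_part (nsnd u) + int_neg_part (nsnd u) = 0)"

definition rat_val :: "nat \<Rightarrow> real" where "rat_val u = of_rat (rat_dec u)"

lemma rat_dec_eq: "rat_dec u = Fract (int_decode (nfst u)) (int_decode (nsnd u))"
  by (simp add: rat_dec_def nfst_def nsnd_def split: prod.splits)

lemma den_pos: "0 < den u"
  by (cases "int_pos_part (nsnd u) + int_neg_part (nsnd u) = 0") (simp_all add: den_def)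

lemma num_pos_neg: "num_pos u = 0 \<or> num_neg u = 0"
  using int_pos_neg_part[of "nfst u"] int_pos_neg_part[of "nsnd u"] by (auto simp: num_pos_def num_neg_def)

lemma rat_val_eq: "rat_val u = (real (num_pos u) - real (num_neg u)) / real (den u)"
proof -
  define a1 where "a1 = int_pos_part (nfst u)"
  define a2 where "a2 = int_neg_part (nfst u)"
  define b1 where "b1 = int_pos_part (nsnd u)"
  define b2 where "b2 = int_neg_part (nsnd u)"
  have ab: "a1 * a2 = 0" "b1 * b2 = 0" using int_pos_neg_part unfolding a1_def a2_def b1_def b2_def by auto
  have rat_val: "rat_val u = (real a1 - real a2) / (real b1 - real b2)"
    unfolding rat_val_def rat_dec_eq Fract_of_int_quotient of_rat_divide int_decode_parts a1_def
        a2_def b1_def b2_def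
    by (simp add: of_rat_diff)
  show ?thesis
  proof (cases "b1 + b2 = 0")
    case True
    then have "b1 = 0" "b2 = 0" by auto
    then show ?thesis using rat_val by (simp add: num_pos_def num_neg_def den_def b1_def[symmetric]
        b2_def[symmetric])
  next
    case False
    have D: "real (den u) = (real b1 + real b2)^2"
      using False by (simp add: den_def b1_def[symmetric] b2_def[symmetric] power2_eq_square)
    have sq: "(real b1 + real b2)^2 = (real b1 - real b2)^2"
      using ab(2) by (simp add: power2_eq_square algebra_simps)
    have nz: "real b1 - real b2 \<noteq> 0"
    proof
      assume "real b1 - real b2 = 0" then have "b1 = b2" by simp
      then show False using ab(2) False by simp
    qed
    have N: "real (num_pos u) - real (num_neg u) = (real a1 - real a2) * (real b1 - real b2)"
      by (simp add: num_pos_def num_neg_def a1_def[symmetric] a2_def[symmetric] b1_def[symmetric]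
          b2_def[symmetric] algebra_simps)
    show ?thesis unfolding rat_val N D sq using nz by (simp add: power2_eq_square)
  qed
qed

definition num_abs :: "nat \<Rightarrow> nat" where "num_abs u = num_pos u + num_neg u"

lemma abs_rat_val: "\<bar>rat_val u\<bar> = real (num_abs u) / real (den u)"
  using num_pos_neg[of u] by (elim disjE) (simp_all add: rat_val_eq num_abs_def abs_divide)

lemma rat_val_sq: "(rat_val u)^2 = real (num_abs u * num_abs u) / real (den u * den u)"
proof -
  have "(rat_val u)^2 = \<bar>rat_val u\<bar>^2" by simp
  also have "\<dots> = (real (num_abs u) / real (den u))^2" by (simp only: abs_rat_val)
  also have "\<dots> = real (num_abs u * num_abs u) / real (den u * den u)" by (simp add: power_divide power2_eq_square)
  finally show ?thesis .
qed

lemma divide_less_divide_iff: "(b::real) > 0 \<Longrightarrow> d > 0 \<Longrightarrow> (a / b < c / d)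
    \<longleftrightarrow> a * d < c * b"
  by (simp add: field_simps)

definition rat_less :: "nat \<Rightarrow> nat \<Rightarrow> bool" where
  "rat_less u v \<longleftrightarrow> num_pos u * den v + num_neg v * den u < num_pos v * den u + num_neg u * den v"

lemma rat_less_iff: "rat_less u v \<longleftrightarrow> rat_val u < rat_val v"
proof -
  have du: "real (den u) > 0" and dv: "real (den v) > 0" using den_pos by auto
  have "rat_val u < rat_val v
      \<longleftrightarrow> (real (num_pos u) - real (num_neg u)) * real (den v) < (real (num_pos v) - real (num_neg v)) * real (den u)"
    unfolding rat_val_eq by (rule divide_less_divide_iff[OF du dv])
  also have "\<dots> \<longleftrightarrow> real (num_pos u * den v + num_neg v * den u) < real (num_pos v * den u + num_neg u * den v)"
    by (simp add: algebra_simps)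
  also have "\<dots> \<longleftrightarrow> rat_less u v" unfolding rat_less_def by (rule of_nat_less_iff)
  finally show ?thesis ..
qed

definition rat_pos :: "nat \<Rightarrow> bool" where "rat_pos u \<longleftrightarrow> 0 < num_pos u"
definition rat_neg :: "nat \<Rightarrow> bool" where "rat_neg u \<longleftrightarrow> 0 < num_neg u"

lemma rat_pos_iff: "rat_pos u \<longleftrightarrow> 0 < rat_val u"
proof -
  have d: "real (den u) > 0" using den_pos by auto
  show ?thesis using num_pos_neg[of u] den_pos[of u] by (elim disjE) (simp_all add: rat_pos_def
      rat_val_eq d zero_less_divide_iff divide_less_0_iff)
qed
lemma rat_neg_iff: "rat_neg u \<longleftrightarrow> rat_val u < 0"
proof -
  have d: "real (den u) > 0" using den_pos by auto
  show ?thesis using num_pos_neg[of u] den_pos[of u] by (elim disjE) (simp_all add: rat_neg_def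
      rat_val_eq d zero_less_divide_iff divide_less_0_iff)
qed

definition rat_sq_less :: "nat \<Rightarrow> nat \<Rightarrow> bool" where
  "rat_sq_less x r \<longleftrightarrow> num_abs r * num_abs r * (den x * den x) < num_abs x * num_abs x * (den r * den r)"
definition rat_sq_less_sum :: "nat \<Rightarrow> nat \<Rightarrow> nat \<Rightarrow> bool" where
  "rat_sq_less_sum x y r
      \<longleftrightarrow> num_abs r * num_abs r * (den x * den x * (den y * den y)) <
      (num_abs x * num_abs x * (den y * den y) + num_abs y * num_abs y * (den x * den x)) * (den r * den r)"

lemma rat_sq_less_iff: "rat_sq_less x r \<longleftrightarrow> (rat_val r)^2 < (rat_val x)^2"
proof -
  have p: "real (den x * den x) > 0" "real (den r * den r) > 0" using den_pos by auto
  have "(rat_val r)^2 < (rat_val x)^2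
      \<longleftrightarrow> real (num_abs r * num_abs r) * real (den x * den x) < real (num_abs x * num_abs x) * real (den r * den r)"
    unfolding rat_val_sq by (rule divide_less_divide_iff[OF p(2) p(1)])
  also have "\<dots> \<longleftrightarrow> rat_sq_less x r" unfolding rat_sq_less_def of_nat_mult[symmetric] by (rule of_nat_less_iff)
  finally show ?thesis ..
qed

lemma rat_sq_less_sum_iff: "rat_sq_less_sum x y r
    \<longleftrightarrow> (rat_val r)^2 < (rat_val x)^2 + (rat_val y)^2"
proof -
  have p: "real (den x * den x) > 0" "real (den r * den r) > 0" "real (den y * den y) > 0" using den_pos by auto
  have e: "(rat_val x)^2 + (rat_val y)^2 = real (num_abs x * num_abs x * (den y * den y) + num_abs y * num_abs y * (den x * den x)) / real (den x * den x * (den y * den y))"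
  proof -
    have nz: "real (den x) \<noteq> 0" "real (den y) \<noteq> 0" using den_pos[of x] den_pos[of y] by auto
    show ?thesis unfolding rat_val_sq using nz by (simp add: field_simps)
  qed
  have p2: "real (den x * den x * (den y * den y)) > 0" using p by simp
  have "(rat_val r)^2 < (rat_val x)^2 + (rat_val y)^2 \<longleftrightarrow>
      real (num_abs r * num_abs r) * real (den x * den x * (den y * den y)) < real (num_abs x * num_abs x * (den y * den y) + num_abs y * num_abs y * (den x * den x)) * real (den r * den r)"
    unfolding e by (subst rat_val_sq, rule divide_less_divide_iff[OF p(2) p2])
  also have "\<dots> \<longleftrightarrow> rat_sq_less_sum x y r" unfolding rat_sq_less_sum_def of_nat_mult[symmetric] by (rule of_nat_less_iff)
  finally show ?thesis ..
qed

lemma computable_int_pos_part: "computable F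
    \<Longrightarrow> computable (\<lambda>g x. int_pos_part (F g x))"
  unfolding int_pos_part_def by (intro computable_if decidable_even computable_div2 computable_const)
lemma computable_int_neg_part: "computable F
    \<Longrightarrow> computable (\<lambda>g x. int_neg_part (F g x))"
  unfolding int_neg_part_def by (intro computable_if decidable_even computable_div2
      computable_const computable_add)
lemma computable_num_pos: "computable F \<Longrightarrow> computable (\<lambda>g x. num_pos (F g x))"
  unfolding num_pos_def by (intro computable_add computable_mult computable_int_pos_part
      computable_int_neg_part computable_nfst computable_nsnd)
lemma computable_num_neg: "computable F \<Longrightarrow> computable (\<lambda>g x. num_neg (F g x))"
  unfolding num_neg_def by (intro computable_add computable_mult computable_int_pos_part
      computable_int_neg_part computable_nfst computable_nsnd)
lemma computable_den: "computable F \<Longrightarrow> computable (\<lambda>g x. den (F g x))"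
  unfolding den_def by (intro computable_add computable_mult computable_int_pos_part
      computable_int_neg_part computable_nfst computable_nsnd computable_of_bool decidable_eq
      computable_const)
lemma computable_num_abs: "computable F \<Longrightarrow> computable (\<lambda>g x. num_abs (F g x))"
  unfolding num_abs_def by (intro computable_add computable_num_pos computable_num_neg)
lemma decidable_rat_less: "computable F \<Longrightarrow> computable G
    \<Longrightarrow> decidable (\<lambda>g x. rat_less (F g x) (G g x))"
  unfolding rat_less_def by (intro decidable_less computable_add computable_mult computable_num_pos
      computable_num_neg computable_den)
lemma decidable_rat_pos: "computable F \<Longrightarrow> decidable (\<lambda>g x. rat_pos (F g x))"
  unfolding rat_pos_def by (intro decidable_less computable_const computable_num_pos)
lemma decidable_rat_neg: "computable F \<Longrightarrow> decidable (\<lambda>g x. rat_neg (F g x))"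
  unfolding rat_neg_def by (intro decidable_less computable_const computable_num_neg)
lemma decidable_rat_sq_less: "computable F \<Longrightarrow> computable G
    \<Longrightarrow> decidable (\<lambda>g x. rat_sq_less (F g x) (G g x))"
  unfolding rat_sq_less_def by (intro decidable_less computable_mult computable_num_abs computable_den)
lemma decidable_rat_sq_less_sum: "computable F \<Longrightarrow> computable G \<Longrightarrow> computable H
    \<Longrightarrow> decidable (\<lambda>g x. rat_sq_less_sum (F g x) (G g x) (H g x))"
  unfolding rat_sq_less_sum_def by (intro decidable_less computable_mult computable_add
      computable_num_abs computable_den)

section \<open>A decidable inclusion test for basic open sets\<close>

definition rect_re_lo :: "nat \<Rightarrow> nat" where "rect_re_lo m = nfst (nsnd m)"
definition rect_re_hi :: "nat \<Rightarrow> nat" where "rect_re_hi m = nfst (nsnd (nsnd m))"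
definition rect_im_lo :: "nat \<Rightarrow> nat" where "rect_im_lo m = nfst (nsnd (nsnd (nsnd m)))"
definition rect_im_hi :: "nat \<Rightarrow> nat" where "rect_im_hi m = nsnd (nsnd (nsnd (nsnd m)))"

definition rect_real :: "real \<Rightarrow> real \<Rightarrow> real \<Rightarrow> real \<Rightarrow> complex option set" where
  "rect_real a b c d = {Some z | z. a < Re z \<and> Re z < b \<and> c < Im z \<and> Im z < d}"
definition ext_real :: "real \<Rightarrow> complex option set" where
  "ext_real r = {None} \<union> {Some z | z. r < norm z}"

lemma bset_eq: "bset m =
   (if nfst m = 0 then rect_real (rat_val (rect_re_lo m)) (rat_val (rect_re_hi m))
                         (rat_val (rect_im_lo m)) (rat_val (rect_im_hi m))
    else ext_real (rat_val (nsnd m)))"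
  by (simp add: bset_def rect_re_lo_def rect_re_hi_def rect_im_lo_def rect_im_hi_def rect_real_def
      ext_real_def rect_def ext_disk_def rat_val_def
      nfst_def nsnd_def split: prod.splits)

text \<open>The rectangle \<open>]a,b[ \<times> ]c,d[\<close> avoids the closed disk of radius \<open>r\<close> if \<open>r < 0\<close>, if one
  of its sides lies beyond \<open>r\<close> on the far side of an axis, or if it lies in an open quadrant and
  its corner nearest to \<open>0\<close> lies beyond \<open>r\<close>.\<close>

definition rect_outside_disk :: "real \<Rightarrow> real \<Rightarrow> real \<Rightarrow> real \<Rightarrow> real \<Rightarrow> bool" where
  "rect_outside_disk a b c d r \<longleftrightarrow>
     r < 0 \<or> (0 < a \<and> r^2 < a^2) \<or> (b < 0 \<and> r^2 < b^2) \<or> (0 < c \<and> r^2 < c^2) \<or> (d < 0 \<and> r^2 < d^2)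
     \<or> (0 < a \<and> 0 < c \<and> r^2 < a^2 + c^2) \<or> (0 < a \<and> d < 0 \<and> r^2 < a^2 + d^2)
     \<or> (b < 0 \<and> 0 < c \<and> r^2 < b^2 + c^2) \<or> (b < 0 \<and> d < 0 \<and> r^2 < b^2 + d^2)"

definition rect_outside_disk_code :: "nat \<Rightarrow> nat \<Rightarrow> nat \<Rightarrow> nat \<Rightarrow> nat \<Rightarrow> bool" where
  "rect_outside_disk_code a b c d r \<longleftrightarrow>
     rat_neg r \<or> (rat_pos a \<and> rat_sq_less a r) \<or> (rat_neg b \<and> rat_sq_less b r)
     \<or> (rat_pos c \<and> rat_sq_less c r) \<or> (rat_neg d \<and> rat_sq_less d r)
     \<or> (rat_pos a \<and> rat_pos c \<and> rat_sq_less_sum a c r) \<or> (rat_pos a \<and> rat_neg d \<and> rat_sq_less_sum a d r)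
     \<or> (rat_neg b \<and> rat_pos c \<and> rat_sq_less_sum b c r) \<or> (rat_neg b \<and> rat_neg d \<and> rat_sq_less_sum b d r)"

definition incl_test :: "nat \<Rightarrow> nat \<Rightarrow> bool" where
  "incl_test a k \<longleftrightarrow>
     (if nfst a = 0 then
        (if nfst k = 0 then
           \<not> rat_less (rect_re_lo a) (rect_re_lo k) \<and> \<not> rat_less (rect_re_hi k) (rect_re_hi a) \<and>
           \<not> rat_less (rect_im_lo a) (rect_im_lo k) \<and> \<not> rat_less (rect_im_hi k) (rect_im_hi a)
         else rect_outside_disk_code (rect_re_lo a) (rect_re_hi a) (rect_im_lo a) (rect_im_hi a) (nsnd k))
      else nfst k \<noteq> 0 \<and> \<not> rat_less (nsnd a) (nsnd k))"

lemma decidable_incl_test: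
  "computable F \<Longrightarrow> computable G \<Longrightarrow> decidable (\<lambda>g x. incl_test (F g x) (G g x))"
  unfolding incl_test_def rect_outside_disk_code_def rect_re_lo_def rect_re_hi_def rect_im_lo_def
    rect_im_hi_def
  by (intro decidable_if decidable_conj decidable_disj decidable_not decidable_eq
      decidable_rat_less decidable_rat_pos decidable_rat_neg decidable_rat_sq_less
      decidable_rat_sq_less_sum computable_nfst computable_nsnd computable_const
      decidable_imp decidable_iff)

definition incl_test_rect :: "real \<Rightarrow> real \<Rightarrow> real \<Rightarrow> real \<Rightarrow> nat \<Rightarrow> bool" where
  "incl_test_rect a b c d k \<longleftrightarrow>
     (if nfst k = 0 then
        rat_val (rect_re_lo k) \<le> a \<and> b \<le> rat_val (rect_re_hi k) \<and>
        rat_val (rect_im_lo k) \<le> c \<and> d \<le> rat_val (rect_im_hi k)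
      else rect_outside_disk a b c d (rat_val (nsnd k)))"

lemma incl_test_rect_code:
  "nfst a = 0 \<Longrightarrow> incl_test a k \<longleftrightarrow>
     incl_test_rect (rat_val (rect_re_lo a)) (rat_val (rect_re_hi a)) (rat_val (rect_im_lo a))
       (rat_val (rect_im_hi a)) k"
  by (simp add: incl_test_def incl_test_rect_def rect_outside_disk_code_def rect_outside_disk_def
      rat_less_iff rat_pos_iff rat_neg_iff rat_sq_less_iff rat_sq_less_sum_iff not_less)
lemma incl_test_ext_code: "nfst a \<noteq> 0 \<Longrightarrow> incl_test a k
    \<longleftrightarrow> nfst k \<noteq> 0 \<and> rat_val (nsnd k) \<le> rat_val (nsnd a)"
  by (simp add: incl_test_def rat_less_iff not_less)

lemma power2_strict_mono_pos: "0 < a \<Longrightarrow> a < (x::real) \<Longrightarrow> a^2 < x^2"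
  by (rule power_strict_mono) auto
lemma power2_strict_antimono_neg: "x < b \<Longrightarrow> b < (0::real) \<Longrightarrow> b^2 < x^2"
proof -
  assume "x < b" "b < 0"
  then have "(-b)^2 < (-x)^2" by (intro power_strict_mono) auto
  then show ?thesis by simp
qed

lemma disjoint_rect_subset_ext: "rect_outside_disk a b c d r
    \<Longrightarrow> rect_real a b c d \<subseteq> ext_real r"
proof
  fix p assume T: "rect_outside_disk a b c d r" and p: "p \<in> rect_real a b c d"
  then obtain z where z: "p = Some z" "a < Re z" "Re z < b" "c < Im z" "Im z < d"
    by (auto simp: rect_real_def)
  have n2: "(norm z)^2 = (Re z)^2 + (Im z)^2" by (rule cmod_power2)
  have x0: "(Re z)^2 \<ge> 0" "(Im z)^2 \<ge> 0" by simp_all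
  have h1: "0 < a \<Longrightarrow> a^2 < (Re z)^2" using z by (intro power2_strict_mono_pos) auto
  have h2: "b < 0 \<Longrightarrow> b^2 < (Re z)^2" using z by (intro power2_strict_antimono_neg) auto
  have h3: "0 < c \<Longrightarrow> c^2 < (Im z)^2" using z by (intro power2_strict_mono_pos) auto
  have h4: "d < 0 \<Longrightarrow> d^2 < (Im z)^2" using z by (intro power2_strict_antimono_neg) auto
  have "r < norm z"
  proof (cases "r < 0")
    case True then show ?thesis using norm_ge_zero[of z] by linarith
  next
    case False
    with T have "r^2 < (Re z)^2 + (Im z)^2"
      unfolding rect_outside_disk_def using h1 h2 h3 h4 x0 by linarith
    then have "r^2 < (norm z)^2" using n2 by simp
    then show ?thesis by (rule power_less_imp_less_base) simp
  qed
  then show "p \<in> ext_real r" using z by (auto simp: ext_real_def)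
qed

lemma incl_test_rect_subset: "incl_test_rect a b c d k
    \<Longrightarrow> rect_real a b c d \<subseteq> bset k"
proof (cases "nfst k = 0")
  case True
  assume "incl_test_rect a b c d k"
  then show ?thesis using True unfolding incl_test_rect_def bset_eq rect_real_def by auto
next
  case False
  assume "incl_test_rect a b c d k"
  then have "rect_outside_disk a b c d (rat_val (nsnd k))" using False unfolding incl_test_rect_def by simp
  then show ?thesis using False unfolding bset_eq by (simp add: disjoint_rect_subset_ext)
qed

lemma incl_test_subset: "incl_test a k \<Longrightarrow> bset a \<subseteq> bset k"
proof (cases "nfst a = 0")
  case True
  assume "incl_test a k"
  then have "incl_test_rect (rat_val (rect_re_lo a)) (rat_val (rect_re_hi a)) (rat_val (rect_im_lo a)) (rat_val (rect_im_hi a)) k"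
    using incl_test_rect_code[OF True] by simp
  then show ?thesis unfolding bset_eq[of a] using True by (simp add: incl_test_rect_subset)
next
  case False
  assume "incl_test a k"
  then have k: "nfst k \<noteq> 0" "rat_val (nsnd k) \<le> rat_val (nsnd a)" using incl_test_ext_code[OF False] by auto
  show ?thesis unfolding bset_eq[of a] bset_eq[of k] using False k by (auto simp: ext_real_def)
qed

lemma rect_real_subset_re_lo: assumes "rect_real a b c d \<subseteq> rect_real a' b' c' d'" "a < b" "c < d" shows "a' \<le> a"
proof (rule ccontr)
  assume "\<not> a' \<le> a"
  then have "a < min a' b" using assms by simp
  then obtain x where x: "a < x" "x < min a' b" using dense by blast
  obtain y where y: "c < y" "y < d" using dense assms(3) by blast
  have "Some (Complex x y) \<in> rect_real a b c d" using x y by (auto simp: rect_real_def)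
  then have "Some (Complex x y) \<in> rect_real a' b' c' d'" using assms(1) by blast
  then show False using x by (auto simp: rect_real_def)
qed
lemma rect_real_subset_re_hi: assumes "rect_real a b c d \<subseteq> rect_real a' b' c' d'" "a < b" "c < d" shows "b \<le> b'"
proof (rule ccontr)
  assume "\<not> b \<le> b'"
  then have "max a b' < b" using assms by simp
  then obtain x where x: "max a b' < x" "x < b" using dense by blast
  obtain y where y: "c < y" "y < d" using dense assms(3) by blast
  have "Some (Complex x y) \<in> rect_real a b c d" using x y by (auto simp: rect_real_def)
  then have "Some (Complex x y) \<in> rect_real a' b' c' d'" using assms(1) by blast
  then show False using x by (auto simp: rect_real_def)
qed
lemma rect_real_subset_im_lo: assumes "rect_real a b c d \<subseteq> rect_real a' b' c' d'" "a < b" "c < d" shows "c' \<le> c"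
proof (rule ccontr)
  assume "\<not> c' \<le> c"
  then have "c < min c' d" using assms by simp
  then obtain y where y: "c < y" "y < min c' d" using dense by blast
  obtain x where x: "a < x" "x < b" using dense assms(2) by blast
  have "Some (Complex x y) \<in> rect_real a b c d" using x y by (auto simp: rect_real_def)
  then have "Some (Complex x y) \<in> rect_real a' b' c' d'" using assms(1) by blast
  then show False using y by (auto simp: rect_real_def)
qed
lemma rect_real_subset_im_hi: assumes "rect_real a b c d \<subseteq> rect_real a' b' c' d'" "a < b" "c < d" shows "d \<le> d'"
proof (rule ccontr)
  assume "\<not> d \<le> d'"
  then have "max c d' < d" using assms by simp
  then obtain y where y: "max c d' < y" "y < d" using dense by blast
  obtain x where x: "a < x" "x < b" using dense assms(2) by blast
  have "Some (Complex x y) \<in> rect_real a b c d" using x y by (auto simp: rect_real_def)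
  then have "Some (Complex x y) \<in> rect_real a' b' c' d'" using assms(1) by blast
  then show False using y by (auto simp: rect_real_def)
qed

lemma rect_real_nonempty: "rect_real a b c d \<noteq> {} \<Longrightarrow> a < b \<and> c < d"
  by (auto simp: rect_real_def)

lemma rect_real_eq_iff:
  assumes eq: "rect_real a b c d = rect_real a' b' c' d'" and ab: "a < b" and cd: "c < d"
  shows "a' = a \<and> b' = b \<and> c' = c \<and> d' = d"
proof -
  have "Some (Complex ((a+b)/2) ((c+d)/2)) \<in> rect_real a b c d" using ab cd by (auto simp: rect_real_def)
  then have ne: "rect_real a' b' c' d' \<noteq> {}" using eq by auto
  from rect_real_nonempty[OF ne] have ab': "a' < b'" "c' < d'" by auto
  have s1: "rect_real a b c d \<subseteq> rect_real a' b' c' d'" and s2: "rect_real a' b' c' d' \<subseteq> rect_real a b c d" using eq by auto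
  show ?thesis
    using rect_real_subset_re_lo[OF s1 ab cd] rect_real_subset_re_lo[OF s2 ab']
        rect_real_subset_re_hi[OF s1 ab cd] rect_real_subset_re_hi[OF s2 ab']
      rect_real_subset_im_lo[OF s1 ab cd] rect_real_subset_im_lo[OF s2 ab'] rect_real_subset_im_hi[OF s1 ab cd] rect_real_subset_im_hi[OF s2 ab']
    by auto
qed

lemma ext_real_eq_iff: assumes eq: "ext_real s = ext_real s'" and s: "0 < s" shows "s' = s"
proof (rule ccontr)
  assume ne: "s' \<noteq> s"
  show False
  proof (cases "s' < s")
    case True
    have "Some (complex_of_real s) \<in> ext_real s'" using True s by (auto simp: ext_real_def)
    then have "Some (complex_of_real s) \<in> ext_real s" using eq by simp
    then have "s < norm (complex_of_real s)" by (auto simp: ext_real_def)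
    then show False using s by simp
  next
    case False
    then have "s < s'" using ne by simp
    have "Some (complex_of_real s') \<in> ext_real s" using \<open>s < s'\<close> s by (auto simp: ext_real_def)
    then have "Some (complex_of_real s') \<in> ext_real s'" using eq by simp
    then have "s' < norm (complex_of_real s')" by (auto simp: ext_real_def)
    then show False using s \<open>s < s'\<close> by simp
  qed
qed

lemma rect_real_neq_ext_real: "rect_real a b c d \<noteq> ext_real r"
  by (auto simp: rect_real_def ext_real_def)

lemma rat_dec_surj: "\<exists>n. rat_dec n = q"
proof (cases q)
  case (Fract a b)
  have "rat_dec (prod_encode (int_encode a, int_encode b)) = Fract a b" by (simp add: rat_dec_def)
  then show ?thesis using Fract by blast
qed

lemma rat_val_surj: "\<exists>n. rat_val n = of_rat q"
  using rat_dec_surj[of q] by (auto simp: rat_val_def)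

lemma bset_rect_real_surj: "\<exists>m. bset m = rect_real (of_rat a) (of_rat b) (of_rat c) (of_rat d)"
proof -
  obtain n1 n2 n3 n4 where n: "rat_val n1 = of_rat a" "rat_val n2 = of_rat b" "rat_val n3 = of_rat c" "rat_val n4 = of_rat d"
    using rat_val_surj by metis
  have "bset (npair 0 (npair n1 (npair n2 (npair n3 n4)))) = rect_real (of_rat a) (of_rat b) (of_rat c) (of_rat d)"
    unfolding bset_eq by (simp add: rect_re_lo_def rect_re_hi_def rect_im_lo_def rect_im_hi_def n)
  then show ?thesis by blast
qed

lemma bset_ext_real_surj: "\<exists>m. bset m = ext_real (of_rat s)"
proof -
  obtain n where n: "rat_val n = of_rat s" using rat_val_surj by metis
  have "bset (npair 1 n) = ext_real (of_rat s)" unfolding bset_eq by (simp add: n)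
  then show ?thesis by blast
qed

section \<open>Completeness of the inclusion test\<close>

lemma power2_abs_shrink_lower: assumes e: "0 < (e::real)"
  shows "(if e < \<bar>x\<bar> then \<bar>x\<bar> - e else 0)^2 \<ge> x^2 - 2 * e * \<bar>x\<bar>"
proof (cases "e < \<bar>x\<bar>")
  case True
  have "(\<bar>x\<bar> - e)^2 = x^2 - 2 * e * \<bar>x\<bar> + e^2"
    by (simp add: power2_eq_square algebra_simps)
  then show ?thesis using True by simp
next
  case False
  have "x^2 = \<bar>x\<bar> * \<bar>x\<bar>" by (simp add: power2_eq_square)
  also have "\<dots> \<le> e * \<bar>x\<bar>" using False by (intro mult_right_mono) auto
  finally have h: "x^2 \<le> e * \<bar>x\<bar>" .
  have h2: "0 \<le> e * \<bar>x\<bar>" using e by simp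
  have "x^2 - 2 * e * \<bar>x\<bar> \<le> 0" using h h2 by linarith
  then show ?thesis using False by simp
qed

lemma box_side_sq_bound:
  assumes e: "0 < e" and a: "x - e < a" "a < x" and b: "x < b" "b < x + e"
  shows "(0 < a \<and> (if e < \<bar>x\<bar> then \<bar>x\<bar> - e else 0)^2 < a^2) \<or>
         (b < 0 \<and> (if e < \<bar>x\<bar> then \<bar>x\<bar> - e else 0)^2 < b^2) \<or>
         (if e < \<bar>x\<bar> then \<bar>x\<bar> - e else (0::real)) = 0"
proof (cases "e < \<bar>x\<bar>")
  case True
  show ?thesis
  proof (cases "0 < x")
    case True
    with \<open>e < \<bar>x\<bar>\<close> have "0 < x - e" by simp
    then have "(x - e)^2 < a^2" using a by (intro power2_strict_mono_pos) auto
    then show ?thesis using \<open>e < \<bar>x\<bar>\<close> True \<open>0 < x - e\<close> a by auto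
  next
    case False
    with \<open>e < \<bar>x\<bar>\<close> have xn: "x + e < 0" by simp
    then have "(x + e)^2 < b^2" using b by (intro power2_strict_antimono_neg) auto
    moreover have "(\<bar>x\<bar> - e)^2 = (x + e)^2"
      using False by (simp add: power2_eq_square algebra_simps)
    ultimately show ?thesis using \<open>e < \<bar>x\<bar>\<close> xn b by auto
  qed
next
  case False then show ?thesis by simp
qed

definition rect_near :: "real \<Rightarrow> complex \<Rightarrow> real \<Rightarrow> real \<Rightarrow> real \<Rightarrow> real \<Rightarrow> bool" where
  "rect_near e w a b c d \<longleftrightarrow> Re w - e < a \<and> a < Re w \<and> Re w < b
      \<and> b < Re w + e \<and>
                             Im w - e < c \<and> c < Im w \<and> Im w < d \<and> d < Im w + e"

lemma rect_near_mono: "rect_near e w a b c d \<Longrightarrow> e \<le> e'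
    \<Longrightarrow> rect_near e' w a b c d"
  by (auto simp: rect_near_def)

text \<open>The margin \<open>e\<close> is chosen so that shrinking both coordinates of \<open>w\<close> by \<open>e\<close> in
absolute value still leaves a point outside the disk of radius \<open>r\<close>.\<close>

lemma rect_outside_disk_near:
  assumes r: "r < norm w"
  shows "\<exists>e>0. \<forall>a b c d. rect_near e w a b c d
      \<longrightarrow> rect_outside_disk a b c d r"
proof (cases "r < 0")
  case True
  then show ?thesis by (intro exI[of _ 1]) (simp add: rect_outside_disk_def)
next
  case False
  define x where "x = Re w"
  define y where "y = Im w"
  have "r^2 < (norm w)^2" using r False by (intro power_strict_mono) auto
  then have S: "0 < x^2 + y^2 - r^2" unfolding x_def y_def by (simp add: cmod_power2)
  define e where "e = (x^2 + y^2 - r^2) / (2 * (\<bar>x\<bar> + \<bar>y\<bar>) + 1)"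
  have den: "0 < 2 * (\<bar>x\<bar> + \<bar>y\<bar>) + 1" by simp
  have e0: "0 < e" unfolding e_def using S den by simp
  have "e * (2 * (\<bar>x\<bar> + \<bar>y\<bar>) + 1) = x^2 + y^2 - r^2" unfolding e_def using den by simp
  then have eS: "2 * e * \<bar>x\<bar> + 2 * e * \<bar>y\<bar> < x^2 + y^2 - r^2" using e0 by (simp add: algebra_simps)
  define mx where "mx = (if e < \<bar>x\<bar> then \<bar>x\<bar> - e else 0)"
  define my where "my = (if e < \<bar>y\<bar> then \<bar>y\<bar> - e else 0)"
  have "mx^2 \<ge> x^2 - 2 * e * \<bar>x\<bar>" "my^2 \<ge> y^2 - 2 * e * \<bar>y\<bar>"
    unfolding mx_def my_def by (rule power2_abs_shrink_lower[OF e0])+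
  then have main: "r^2 < mx^2 + my^2" using eS by linarith
  show ?thesis
  proof (intro exI[of _ e] conjI e0 allI impI)
    fix a b c d
    assume h: "rect_near e w a b c d"
    have px: "(0 < a \<and> mx^2 < a^2) \<or> (b < 0 \<and> mx^2 < b^2) \<or> mx = 0"
      unfolding mx_def using box_side_sq_bound[OF e0, of x a b] h unfolding x_def rect_near_def by auto
    have py: "(0 < c \<and> my^2 < c^2) \<or> (d < 0 \<and> my^2 < d^2) \<or> my = 0"
      unfolding my_def using box_side_sq_bound[OF e0, of y c d] h unfolding y_def rect_near_def by auto
    show "rect_outside_disk a b c d r"
      using px py main unfolding rect_outside_disk_def by (smt (verit) zero_power2 zero_le_power2)
  qed
qed

lemma incl_test_rect_near:
  assumes z: "Some w \<in> bset k"
  shows "\<exists>e>0. \<forall>a b c d. rect_near e w a b c d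
      \<longrightarrow> incl_test_rect a b c d k"
proof (cases "nfst k = 0")
  case True
  then have z': "rat_val (rect_re_lo k) < Re w" "Re w < rat_val (rect_re_hi k)"
      "rat_val (rect_im_lo k) < Im w" "Im w < rat_val (rect_im_hi k)"
    using z unfolding bset_eq rect_real_def by auto
  define e where "e = min (min (Re w - rat_val (rect_re_lo k)) (rat_val (rect_re_hi k) - Re w))
                          (min (Im w - rat_val (rect_im_lo k)) (rat_val (rect_im_hi k) - Im w))"
  have e0: "0 < e" using z' unfolding e_def by simp
  have "e \<le> Re w - rat_val (rect_re_lo k)" "e \<le> rat_val (rect_re_hi k) - Re w"
      "e \<le> Im w - rat_val (rect_im_lo k)" "e \<le> rat_val (rect_im_hi k) - Im w"
    unfolding e_def by auto
  then show ?thesis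
    using True e0 by (intro exI[of _ e]) (auto simp: incl_test_rect_def rect_near_def)
next
  case False
  then have "rat_val (nsnd k) < norm w" using z unfolding bset_eq ext_real_def by auto
  then show ?thesis using False by (simp add: incl_test_rect_def rect_outside_disk_near)
qed

lemma incl_test_rect_near_uniform:
  "\<exists>e>0. \<forall>k<N. Some w \<in> bset k
      \<longrightarrow> (\<forall>a b c d. rect_near e w a b c d
      \<longrightarrow> incl_test_rect a b c d k)"
proof -
  define K where "K = {k. k < N \<and> Some w \<in> bset k}"
  have "\<forall>k\<in>K. \<exists>e>0. \<forall>a b c d. rect_near e w a b c d
      \<longrightarrow> incl_test_rect a b c d k"
    using incl_test_rect_near unfolding K_def by blast
  then obtain ef where ef: "\<forall>k\<in>K. ef k > 0
      \<and> (\<forall>a b c d. rect_near (ef k) w a b c d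
      \<longrightarrow> incl_test_rect a b c d k)"
    by metis
  define e where "e = Min (insert 1 (ef ` K))"
  have fin: "finite (insert 1 (ef ` K))" unfolding K_def by simp
  have "0 < e" unfolding e_def using fin ef by (subst Min_gr_iff) auto
  moreover have "e \<le> ef k" if "k \<in> K" for k unfolding e_def using fin that by (intro Min_le) auto
  ultimately show ?thesis using ef rect_near_mono unfolding K_def by blast
qed

lemma incl_test_of_rect:
  assumes ba: "bset a = rect_real \<alpha> \<beta> \<gamma> \<delta>" and "\<alpha> < \<beta>" "\<gamma> < \<delta>" and "incl_test_rect \<alpha> \<beta> \<gamma> \<delta> k"
  shows "incl_test a k"
proof -
  have a: "nfst a = 0"
    using ba rect_real_neq_ext_real by (metis bset_eq)
  then have "rect_real \<alpha> \<beta> \<gamma> \<delta> = rect_real (rat_val (rect_re_lo a)) (rat_val (rect_re_hi a))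
      (rat_val (rect_im_lo a)) (rat_val (rect_im_hi a))"
    using ba by (simp add: bset_eq)
  with rect_real_eq_iff[OF this assms(2,3)] show ?thesis
    using incl_test_rect_code[OF a] assms(4) by simp
qed

lemma incl_test_complete_finite:
  "\<exists>A\<in>range bset. Some w \<in> A
      \<and> (\<forall>a. bset a = A
      \<longrightarrow> (\<forall>k<N. Some w \<in> bset k \<longrightarrow> incl_test a k))"
proof -
  obtain e where e0: "0 < e"
    and e: "\<forall>k<N. Some w \<in> bset k
        \<longrightarrow> (\<forall>a b c d. rect_near e w a b c d
        \<longrightarrow> incl_test_rect a b c d k)"
    using incl_test_rect_near_uniform by blast
  obtain qa where qa: "Re w - e < of_rat qa" "of_rat qa < Re w" using of_rat_dense[of "Re w - e" "Re w"] e0 by auto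
  obtain qb where qb: "Re w < of_rat qb" "of_rat qb < Re w + e" using of_rat_dense[of "Re w" "Re w + e"] e0 by auto
  obtain qc where qc: "Im w - e < of_rat qc" "of_rat qc < Im w" using of_rat_dense[of "Im w - e" "Im w"] e0 by auto
  obtain qd where qd: "Im w < of_rat qd" "of_rat qd < Im w + e" using of_rat_dense[of "Im w" "Im w + e"] e0 by auto
  define A where "A = rect_real (of_rat qa) (of_rat qb) (of_rat qc) (of_rat qd)"
  have near: "rect_near e w (of_rat qa) (of_rat qb) (of_rat qc) (of_rat qd)"
    unfolding rect_near_def using qa qb qc qd by auto
  have "A \<in> range bset" unfolding A_def using bset_rect_real_surj by (metis rangeI)
  moreover have "Some w \<in> A" unfolding A_def rect_real_def using qa qb qc qd by auto
  moreover have "incl_test a k" if "bset a = A" "k < N" "Some w \<in> bset k" for a k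
  proof (rule incl_test_of_rect)
    show "bset a = rect_real (of_rat qa) (of_rat qb) (of_rat qc) (of_rat qd)" using that(1) A_def by simp
    show "incl_test_rect (of_rat qa) (of_rat qb) (of_rat qc) (of_rat qd) k" using e that(2,3) near by blast
  qed (use qa qb qc qd in auto)
  ultimately show ?thesis by blast
qed

lemma incl_test_complete_infinity:
  "\<exists>A\<in>range bset. None \<in> A
      \<and> (\<forall>a. bset a = A
      \<longrightarrow> (\<forall>k<N. None \<in> bset k \<longrightarrow> incl_test a k))"
proof -
  define M where "M = Max (insert 1 ((\<lambda>k. rat_val (nsnd k)) ` {..<N}))"
  have fin_set: "finite (insert 1 ((\<lambda>k. rat_val (nsnd k)) ` {..<N}))" by simp
  have M1: "1 \<le> M" unfolding M_def using fin_set by (intro Max_ge) auto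
  have Mk: "rat_val (nsnd k) \<le> M" if "k < N" for k unfolding M_def using fin_set that by (intro Max_ge) auto
  define s :: rat where "s = of_nat (nat \<lceil>M\<rceil> + 1)"
  have sr: "(of_rat s :: real) = of_nat (nat \<lceil>M\<rceil> + 1)" by (simp only: s_def of_rat_of_nat_eq)
  have sM: "M \<le> of_rat s" unfolding sr using M1 by linarith
  have s0: "(0::real) < of_rat s" using sM M1 by linarith
  define A where "A = ext_real (of_rat s)"
  obtain m where m: "bset m = ext_real (of_rat s)" using bset_ext_real_surj by blast
  have Ar: "A \<in> range bset" unfolding A_def by (rule range_eqI[where f=bset and x=m]) (simp add: m)
  have zA: "None \<in> A" unfolding A_def ext_real_def by simp
  have "\<forall>a. bset a = A
      \<longrightarrow> (\<forall>k<N. None \<in> bset k \<longrightarrow> incl_test a k)"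
  proof (intro allI impI)
    fix a k assume ba: "bset a = A" and kN: "k < N" and zk: "None \<in> bset k"
    have pa: "nfst a \<noteq> 0"
    proof
      assume "nfst a = 0"
      then have "None \<in> bset a" using ba zA by simp
      then show False using \<open>nfst a = 0\<close> by (simp add: bset_eq rect_real_def)
    qed
    then have "ext_real (rat_val (nsnd a)) = ext_real (of_rat s)"
      using ba unfolding A_def bset_eq[of a] by simp
    then have "ext_real (of_rat s) = ext_real (rat_val (nsnd a))" by simp
    from ext_real_eq_iff[OF this s0] have eq: "rat_val (nsnd a) = of_rat s" .
    have pk: "nfst k \<noteq> 0"
    proof
      assume "nfst k = 0" then show False using zk by (simp add: bset_eq rect_real_def)
    qed
    show "incl_test a k" using incl_test_ext_code[OF pa] pk eq Mk[OF kN] sM by simp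
  qed
  then show ?thesis using Ar zA by blast
qed

lemma incl_test_complete: "\<exists>A\<in>range bset. z \<in> A
    \<and> (\<forall>a. bset a = A
    \<longrightarrow> (\<forall>k<N. z \<in> bset k \<longrightarrow> incl_test a k))"
  using incl_test_complete_finite incl_test_complete_infinity by (cases z) auto

definition incl_name :: "nat \<Rightarrow> nat \<Rightarrow> nat" where
  "incl_name a k = (if incl_test a k then Suc k else 0)"

text \<open>The oracle handed to \<open>p\<close>: \<open>chi X\<close> at even positions (shifted by one in \<open>fseq X p\<close>,
  whose position \<open>0\<close> holds the code of \<open>p\<close>), and \<open>incl_name a\<close> at odd positions.\<close>

definition point_oracle :: "(nat \<Rightarrow> nat) \<Rightarrow> nat \<Rightarrow> nat \<Rightarrow> nat" where
  "point_oracle G a k = (if even k then G (k + 2) else incl_name a (k div 2))"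

definition init_code :: "nat \<Rightarrow> nat \<Rightarrow> nat" where
  "init_code pc nn = npair (npair 0 (npair pc (lcons nn 0))) 0"

definition sim_state :: "(nat \<Rightarrow> nat) \<Rightarrow> nat \<Rightarrow> nat" where
  "sim_state G n = run_code (point_oracle G (G (2 * nfst n + 1) - 1)) (nsnd (nsnd n))
                     (init_code (G 0) (nfst (nsnd n)))"

text \<open>Position \<open>npair j (npair nn t)\<close> of the output lists the set output at position \<open>nn\<close>
  by \<open>t\<close> steps of \<open>p\<close>, run on the \<open>j\<close>-th set listed in the name \<open>c\<close> of \<open>C\<close>.\<close>

definition image_name_fn :: "(nat \<Rightarrow> nat) \<Rightarrow> nat \<Rightarrow> nat" where
  "image_name_fn G n =
     (if G (2 * nfst n + 1) \<noteq> 0 \<and> nsnd (sim_state G n) = 0 \<and> nfst (nfst (sim_state G n)) = 1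
      then nsnd (nfst (sim_state G n)) else 0)"

lemma computable_point_oracle:
  "computable K \<Longrightarrow> computable Y \<Longrightarrow> computable (\<lambda>g y. point_oracle g (Y g y) (K g y))"
  unfolding point_oracle_def incl_name_def
  by (intro computable_if decidable_even computable_oracle computable_add computable_const
      decidable_incl_test computable_div2 computable_suc)

lemma computable_sim_state: "computable sim_state"
proof -
  have "computable (\<lambda>g y. run_code (point_oracle g ((\<lambda>g y. g (2 * nfst y + 1) - 1) g y))
                            (nsnd (nsnd y)) (init_code (g 0) (nfst (nsnd y))))"
    by (rule computable_run_code[where Or=point_oracle and Z="\<lambda>g y. g (2 * nfst y + 1) - 1"],
        rule computable_point_oracle, assumption+,
        (intro computable_nsnd computable_id), unfold init_code_def,
        (intro computable_npair computable_const computable_oracle computable_lcons computable_nfst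
          computable_nsnd computable_id),
        intro computable_sub computable_oracle computable_add computable_mult computable_const
          computable_nfst computable_id)
  then show ?thesis unfolding sim_state_def[abs_def] by simp
qed

lemma computable_image_name_fn: "computable image_name_fn"
  unfolding image_name_fn_def[abs_def]
  by (intro computable_if decidable_conj decidable_not decidable_eq computable_oracle
      computable_add computable_mult computable_const computable_nfst computable_nsnd
      computable_id computable_sim_state)

lemma enc_eq_halted:
  assumes "enc_state s = x" "nsnd x = 0" "nfst (nfst x) = 1"
  shows "s = (Rt (nsnd (nfst x)), [])"
proof -
  obtain m st where s: "s = (m, st)" by (cases s)
  have x: "x = npair (enc_mode m) (list_encode (map enc_frame st))"
    using assms(1) s by (simp add: enc_state_def)
  have "st = []" using assms(2) x by simp
  moreover obtain v where "m = Rt v" using assms(3) x by (cases m) auto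
  ultimately show ?thesis using s x by simp
qed

lemma enc_halted:
  "nsnd (enc_state (Rt v, [])) = 0" "nfst (nfst (enc_state (Rt v, []))) = 1"
  "nsnd (nfst (enc_state (Rt v, []))) = v"
  by (simp_all add: enc_state_def)

lemma init_code_enc: "init_code (rf_enc p) nn = enc_state (Ev p [nn], [])"
  by (simp add: init_code_def enc_state_def)

lemma point_oracle_join: "point_oracle (join (fseq X p) c) a = join (chi X) (incl_name a)"
proof
  fix k
  show "point_oracle (join (fseq X p) c) a k = join (chi X) (incl_name a) k"
  proof (cases "even k")
    case True
    then have "even (k + 2)" "(k + 2) div 2 = Suc (k div 2)" by auto
    then show ?thesis using True by (simp add: point_oracle_def join_def fseq_def)
  next
    case False
    then show ?thesis by (simp add: point_oracle_def join_def incl_name_def)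
  qed
qed

lemma image_name_fn_eq_Suc_iff:
  "image_name_fn (join (fseq X p) c) (npair j (npair nn t)) = Suc m \<longleftrightarrow>
     (\<exists>a. c j = Suc a \<and> run (join (chi X) (incl_name a)) t (Ev p [nn], []) = (Rt (Suc m), []))"
proof -
  have state: "sim_state (join (fseq X p) c) (npair j (npair nn t)) =
      enc_state (run (join (chi X) (incl_name (c j - 1))) t (Ev p [nn], []))"
  proof -
    have "join (fseq X p) c 0 = rf_enc p" "join (fseq X p) c (2 * j + 1) = c j"
      by (simp_all add: join_def fseq_def)
    then show ?thesis by (simp add: sim_state_def point_oracle_join init_code_enc run_code_enc)
  qed
  show ?thesis
  proof
    assume "image_name_fn (join (fseq X p) c) (npair j (npair nn t)) = Suc m"
    then show "\<exists>a. c j = Suc a \<and> run (join (chi X) (incl_name a)) t (Ev p [nn], []) = (Rt (Suc m), [])"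
      using enc_eq_halted[OF state[symmetric]]
      by (auto simp: image_name_fn_def join_def split: if_splits intro!: exI[of _ "c j - 1"])
  next
    assume "\<exists>a. c j = Suc a \<and> run (join (chi X) (incl_name a)) t (Ev p [nn], []) = (Rt (Suc m), [])"
    then show "image_name_fn (join (fseq X p) c) (npair j (npair nn t)) = Suc m"
      using state by (auto simp: image_name_fn_def join_def enc_halted)
  qed
qed

lemma listedI: "q k = Suc m \<Longrightarrow> bset m \<in> listed q"
  unfolding listed_def by blast

lemma pt_name_prefix:
  assumes "\<And>k. k < N \<Longrightarrow> Q k \<Longrightarrow> z \<in> bset k"
  shows "pt_name z (\<lambda>k. if k < N then (if Q k then Suc k else 0)
                         else if z \<in> bset (k - N) then Suc (k - N) else 0)" (is "pt_name z ?q")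
  unfolding pt_name_def
proof (rule set_eqI, rule iffI)
  fix B assume "B \<in> listed ?q"
  then obtain m k where "B = bset m" "?q k = Suc m" unfolding listed_def by blast
  then show "B \<in> {B \<in> range bset. z \<in> B}" using assms by (auto split: if_splits)
next
  fix B assume "B \<in> {B \<in> range bset. z \<in> B}"
  then obtain m where B: "B = bset m" "z \<in> bset m" by blast
  then have "?q (N + m) = Suc m" by simp
  then show "B \<in> listed ?q" unfolding B(1) by (rule listedI)
qed

lemma pt_name_canonical: "pt_name z (\<lambda>k. if z \<in> bset k then Suc k else 0)"
  using pt_name_prefix[of 0 "\<lambda>_. False" z] by (simp cong: if_cong)

lemma name_run_output:
  assumes "fun_name U f X p" "z \<in> U" "pt_name z q"
    and "run (join (chi X) q) t (Ev p [nn], []) = (Rt (Suc m), [])"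
  shows "f z \<in> bset m"
proof -
  obtain r where r: "computes p (join (chi X) q) r" "pt_name (f z) r"
    using assms(1-3) unfolding fun_name_def by blast
  then have "eval (join (chi X) q) p [nn] (r nn)" unfolding computes_def by blast
  then obtain t' where "run (join (chi X) q) t' (Ev p [nn], []) = (Rt (r nn), [])"
    using eval_imp_runs_to unfolding runs_to_def by blast
  then have "r nn = Suc m" using run_halted_unique assms(4) by metis
  then have "bset m \<in> listed r" by (rule listedI)
  then show ?thesis using r(2) unfolding pt_name_def by blast
qed

lemma image_name_fn_sound:
  assumes fn: "fun_name U f X p" and CU: "C \<subseteq> U" and cn: "cl_name C c"
    and out: "image_name_fn (join (fseq X p) c) n = Suc m"
  shows "bset m \<inter> f ` C \<noteq> {}"
proof -
  obtain j nn t where n: "n = npair j (npair nn t)" by (metis npair_nfst_nsnd)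
  obtain a where cj: "c j = Suc a"
    and run: "run (join (chi X) (incl_name a)) t (Ev p [nn], []) = (Rt (Suc m), [])"
    using out image_name_fn_eq_Suc_iff unfolding n by blast
  have "bset a \<inter> C \<noteq> {}" using cn cj listedI[of c j a] unfolding cl_name_def by blast
  then obtain z where zA: "z \<in> bset a" and zC: "z \<in> C" by blast
  obtain N where N: "\<And>g'. \<forall>k<N. g' k = join (chi X) (incl_name a) k \<Longrightarrow>
      run g' t (Ev p [nn], []) = run (join (chi X) (incl_name a)) t (Ev p [nn], [])"
    using run_oracle_prefix by blast
  define q where "q k = (if k < N then (if incl_test a k then Suc k else 0)
                         else if z \<in> bset (k - N) then Suc (k - N) else 0)" for k
  have "pt_name z q" unfolding q_def using incl_test_subset zA by (intro pt_name_prefix) blast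
  moreover have "\<forall>k<N. join (chi X) q k = join (chi X) (incl_name a) k"
    by (auto simp: join_def q_def incl_name_def)
  then have "run (join (chi X) q) t (Ev p [nn], []) = (Rt (Suc m), [])" using N run by simp
  ultimately have "f z \<in> bset m" using name_run_output fn zC CU by blast
  then show ?thesis using zC by blast
qed

lemma image_name_fn_complete:
  assumes fn: "fun_name U f X p" and CU: "C \<subseteq> U" and cn: "cl_name C c"
    and zC: "z \<in> C" and fz: "f z \<in> bset m"
  shows "bset m \<in> listed (image_name_fn (join (fseq X p) c))"
proof -
  define qz where "qz k = (if z \<in> bset k then Suc k else 0)" for k
  have "pt_name z qz" unfolding qz_def by (rule pt_name_canonical)
  moreover have "z \<in> U" using zC CU by blast
  ultimately obtain r where r: "computes p (join (chi X) qz) r" "pt_name (f z) r"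
    using fn unfolding fun_name_def by blast
  have "bset m \<in> listed r" using r(2) fz unfolding pt_name_def by blast
  then obtain nn m' where rnn: "r nn = Suc m'" and m': "bset m' = bset m" unfolding listed_def by blast
  have "eval (join (chi X) qz) p [nn] (Suc m')" using r(1) rnn unfolding computes_def by metis
  then obtain t where run: "run (join (chi X) qz) t (Ev p [nn], []) = (Rt (Suc m'), [])"
    using eval_imp_runs_to unfolding runs_to_def by blast
  obtain N where N: "\<And>g'. \<forall>k<N. g' k = join (chi X) qz k \<Longrightarrow>
      run g' t (Ev p [nn], []) = run (join (chi X) qz) t (Ev p [nn], [])"
    using run_oracle_prefix by blast
  obtain A where Ar: "A \<in> range bset" and zA: "z \<in> A"
    and At: "\<forall>a. bset a = A
        \<longrightarrow> (\<forall>k<N. z \<in> bset k \<longrightarrow> incl_test a k)"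
    using incl_test_complete[of z N] by blast
  have "A \<in> listed c" using cn Ar zA zC unfolding cl_name_def by blast
  then obtain a j where cj: "c j = Suc a" and Aa: "A = bset a" unfolding listed_def by blast
  have "incl_name a k = qz k" if "k < N" for k
    using At Aa incl_test_subset[of a k] zA that by (auto simp: incl_name_def qz_def)
  then have "\<forall>k<N. join (chi X) (incl_name a) k = join (chi X) qz k"
    by (simp add: join_def)
  then have "run (join (chi X) (incl_name a)) t (Ev p [nn], []) = (Rt (Suc m'), [])" using N run by simp
  then have "image_name_fn (join (fseq X p) c) (npair j (npair nn t)) = Suc m'"
    using cj image_name_fn_eq_Suc_iff by blast
  then show ?thesis unfolding m'[symmetric] by (rule listedI)
qed

lemma image_name_fn_cl_name:
  assumes "fun_name U f X p" "C \<subseteq> U" "cl_name C c"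
  shows "cl_name (f ` C) (image_name_fn (join (fseq X p) c))"
  unfolding cl_name_def
proof (rule set_eqI, rule iffI)
  fix B assume "B \<in> listed (image_name_fn (join (fseq X p) c))"
  then show "B \<in> {B \<in> range bset. B \<inter> f ` C \<noteq> {}}"
    unfolding listed_def using image_name_fn_sound[OF assms] by blast
next
  fix B assume "B \<in> {B \<in> range bset. B \<inter> f ` C \<noteq> {}}"
  then show "B \<in> listed (image_name_fn (join (fseq X p) c))"
    using image_name_fn_complete[OF assms] by blast
qed

theorem theorem2p9:
  shows "\<exists>M :: rf. \<forall>U f C X p c.
           meromorphic_sphere U f \<longrightarrow> cs_closed C \<longrightarrow> C \<subseteq> U \<longrightarrow>
           fun_name U f X p \<longrightarrow> cl_name C c \<longrightarrow>
           (\<exists>r. computes M (join (fseq X p) c) r \<and> cl_name (f ` C) r)"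
proof -
  obtain M where M: "\<And>g x. eval g M [x] (image_name_fn g x)"
    using computable_image_name_fn unfolding computable_def by blast
  then have "computes M g (image_name_fn g)" for g
    unfolding computes_def by blast
  then show ?thesis using image_name_fn_cl_name by blast
qed

end
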